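(* Let $r,t$ be integers with $2\le r\le t\le 2r$, let $\alpha=2^r-1$, $\beta=2^{t-1}-2^{r-1}$, and let $\mathcal{C}\subseteq\mathbb{Z}_2^\alpha\times\mathbb{Z}_4^\beta$ be a $\mathbb{Z}_2\mathbb{Z}_4$-additive 1-perfect code. Then (i) $\mathcal{C}$ has type $(\alpha,\beta;\gamma,\delta;\kappa)$ with $\gamma=2^r-1-2r+t$, $\delta=2^{t-1}-2^{r-1}+r-t$ and $\kappa=\gamma$; (ii) the dual code $\mathcal{C}^\perp$ has type $(\alpha,\beta;\bar\gamma,\bar\delta;\bar\kappa)$ with $\bar\gamma=2r-t$, $\bar\delta=t-r$ and $\bar\kappa=\bar\gamma$.
   Context: A $\mathbb{Z}_2\mathbb{Z}_4$-additive code is an additive subgroup $\mathcal{C}$ of $\mathbb{Z}_2^\alpha\times\mathbb{Z}_4^\beta$; vectors are $\mathbf{u}=(u\mid u')$ with $u\in\mathbb{Z}_2^\alpha$, $u'\in\mathbb{Z}_4^\beta$; $X$ denotes the first $\alpha$ coordinates and $S_X$ the set of projections of a set $S$ of vectors onto $X$. The Gray map $\phi:\mathbb{Z}_4\to\mathbb{Z}_2^2$ is $0\mapsto(0,0),1\mapsto(0,1),2\mapsto(1,1),3\mapsto(1,0)$, and $\Phi(u\mid u')=(u\mid\phi(u'_1),\dots,\phi(u'_\beta))$. A binary code $C\subseteq\mathbb{Z}_2^n$ is 1-perfect if the Hamming balls of radius 1 around its codewords partition $\mathbb{Z}_2^n$; a $\mathbb{Z}_2\mathbb{Z}_4$-additive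 code is 1-perfect if its Gray image is. If $\mathcal{C}\cong\mathbb{Z}_2^\gamma\times\mathbb{Z}_4^\delta$ as a group, $\mathcal{C}_b$ is the subgroup of codewords of order at most 2, and $\kappa=\dim (\mathcal{C}_b)_X$, then $\mathcal{C}$ has type $(\alpha,\beta;\gamma,\delta;\kappa)$. The dual is $\mathcal{C}^\perp=\{\mathbf{v}:\mathbf{u}\cdot\mathbf{v}=0\ \forall\mathbf{u}\in\mathcal{C}\}$ with $\mathbf{u}\cdot\mathbf{v}=2\sum_{i=1}^\alpha u_iv_i+\sum_{j=1}^\beta u'_jv'_j\in\mathbb{Z}_4$ (binary entries read as $0,1\in\mathbb{Z}_4$). *)

theory Defs
  imports Main
begin

text \<open>A vector of Z2^a x Z4^b is a pair (u, u') of functions nat => int, where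
  u i in {0,1} for i < a and u i = 0 otherwise, and u' j in {0,1,2,3} for j < b
  and u' j = 0 otherwise.\<close>

type_synonym z2z4vec = "(nat \<Rightarrow> int) \<times> (nat \<Rightarrow> int)"

definition V :: "nat \<Rightarrow> nat \<Rightarrow> z2z4vec set" where
  "V a b = {(u, u'). (\<forall>i. if i < a then u i \<in> {0,1} else u i = 0) \<and>
                     (\<forall>j. if j < b then u' j \<in> {0,1,2,3} else u' j = 0)}"

definition vadd :: "z2z4vec \<Rightarrow> z2z4vec \<Rightarrow> z2z4vec" where
  "vadd x y = ((\<lambda>i. (fst x i + fst y i) mod 2), (\<lambda>j. (snd x j + snd y j) mod 4))"

definition vzero :: z2z4vec where
  "vzero = ((\<lambda>i. 0), (\<lambda>j. 0))"

text \<open>Additive subgroup of Z2^a x Z4^b (finite, so closure under addition suffices).\<close>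
definition additive_code :: "nat \<Rightarrow> nat \<Rightarrow> z2z4vec set \<Rightarrow> bool" where
  "additive_code a b C \<longleftrightarrow> C \<subseteq> V a b \<and> vzero \<in> C \<and> (\<forall>x\<in>C. \<forall>y\<in>C. vadd x y \<in> C)"

definition iso_Z2Z4 :: "z2z4vec set \<Rightarrow> nat \<Rightarrow> nat \<Rightarrow> bool" where
  "iso_Z2Z4 C g d \<longleftrightarrow> (\<exists>f. bij_betw f C (V g d) \<and>
       (\<forall>x\<in>C. \<forall>y\<in>C. f (vadd x y) = vadd (f x) (f y)))"

definition order2_part :: "z2z4vec set \<Rightarrow> z2z4vec set" where
  "order2_part C = {x \<in> C. vadd x x = vzero}"

definition bsum :: "(nat \<Rightarrow> int) set \<Rightarrow> (nat \<Rightarrow> int)" where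
  "bsum S = (\<lambda>i. (\<Sum>v\<in>S. v i) mod 2)"

definition bin_dim :: "(nat \<Rightarrow> int) set \<Rightarrow> nat \<Rightarrow> bool" where
  "bin_dim W k \<longleftrightarrow> (\<exists>B. finite B \<and> B \<subseteq> W \<and> card B = k \<and>
       inj_on bsum (Pow B) \<and> bsum ` Pow B = W)"

definition has_type :: "nat \<Rightarrow> nat \<Rightarrow> z2z4vec set \<Rightarrow> nat \<Rightarrow> nat \<Rightarrow> nat \<Rightarrow> bool" where
  "has_type a b C g d k \<longleftrightarrow> additive_code a b C \<and> iso_Z2Z4 C g d \<and>
       bin_dim (fst ` order2_part C) k"

definition inner24 :: "nat \<Rightarrow> nat \<Rightarrow> z2z4vec \<Rightarrow> z2z4vec \<Rightarrow> int" where
  "inner24 a b x y = (2 * (\<Sum>i<a. fst x i * fst y i) + (\<Sum>j<b. snd x j * snd y j)) mod 4"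

definition dual :: "nat \<Rightarrow> nat \<Rightarrow> z2z4vec set \<Rightarrow> z2z4vec set" where
  "dual a b C = {y \<in> V a b. \<forall>x\<in>C. inner24 a b x y = 0}"

text \<open>Gray map: 0 -> (0,0), 1 -> (0,1), 2 -> (1,1), 3 -> (1,0).\<close>
definition gray1 :: "int \<Rightarrow> int" where
  "gray1 z = (if z = 2 \<or> z = 3 then 1 else 0)"
definition gray2 :: "int \<Rightarrow> int" where
  "gray2 z = (if z = 1 \<or> z = 2 then 1 else 0)"

definition Phi :: "nat \<Rightarrow> z2z4vec \<Rightarrow> (nat \<Rightarrow> int)" where
  "Phi a x = (\<lambda>i. if i < a then fst x i
                 else if even (i - a) then gray1 (snd x ((i - a) div 2))
                 else gray2 (snd x ((i - a) div 2)))"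

definition BV :: "nat \<Rightarrow> (nat \<Rightarrow> int) set" where
  "BV n = {x. \<forall>i. if i < n then x i \<in> {0,1} else x i = 0}"

definition hdist :: "nat \<Rightarrow> (nat \<Rightarrow> int) \<Rightarrow> (nat \<Rightarrow> int) \<Rightarrow> nat" where
  "hdist n x y = card {i. i < n \<and> x i \<noteq> y i}"

definition perfect1 :: "nat \<Rightarrow> (nat \<Rightarrow> int) set \<Rightarrow> bool" where
  "perfect1 n D \<longleftrightarrow> D \<subseteq> BV n \<and> (\<forall>x\<in>BV n. \<exists>!c. c \<in> D \<and> hdist n x c \<le> 1)"

end

theory Submission
  imports Defs "HOL-Library.FuncSet" Complex_Main
begin

text \<open>
  A Z2Z4-additive code \<open>H\<close> with \<open>|H| = 2^(\<gamma>+2\<delta>)\<close> and \<open>2^(\<gamma>+\<delta>)\<close> codewords of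
  order at most 2 is isomorphic to \<open>Z2^\<gamma> \<times> Z4^\<delta>\<close>: extend a Z2-basis of \<open>2H\<close> to one of the
  order-2 part and replace the elements of \<open>2H\<close> by halves. Likewise \<open>\<kappa>\<close> is determined by the
  number of codewords of order at most 2 and the number of those lying in \<open>2V\<close>.

  For a 1-perfect code \<open>C\<close> every vector \<open>v\<close> splits uniquely as \<open>c + e\<close> with \<open>c \<in> C\<close> and \<open>e\<close>
  of Gray weight at most 1, i.e. \<open>e \<in> {0, e\<^sub>i, \<plusminus>e\<^sub>j}\<close>. Counting these decompositions
  inside \<open>V\<close>, inside the vectors of order 2 and inside \<open>2V\<close>, and using that \<open>2e \<in> C\<close> forces
  \<open>e\<close> to be binary, yields all the numbers above for \<open>C\<close>. For the dual code they follow from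
  \<open>|H| |H\<^sup>\<bottom>| = |V|\<close> (character sums) applied to \<open>C\<close>, to \<open>{v. 2v \<in> C}\<close> and to \<open>C + 2V\<close>, whose
  duals are \<open>C\<^sup>\<bottom>\<close>, \<open>C\<^sup>\<bottom> \<inter> 2V\<close> and \<open>C\<^sup>\<bottom> \<inter> ord2\<close>.
\<close>

section \<open>Arithmetic in Z2^a \<times> Z4^b\<close>

definition vsub :: "z2z4vec \<Rightarrow> z2z4vec \<Rightarrow> z2z4vec" where
  "vsub x y = ((\<lambda>i. (fst x i - fst y i) mod 2), (\<lambda>j. (snd x j - snd y j) mod 4))"

lemma fst_vadd [simp]: "fst (vadd x y) i = (fst x i + fst y i) mod 2"
  and snd_vadd [simp]: "snd (vadd x y) j = (snd x j + snd y j) mod 4"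
  and fst_vsub [simp]: "fst (vsub x y) i = (fst x i - fst y i) mod 2"
  and snd_vsub [simp]: "snd (vsub x y) j = (snd x j - snd y j) mod 4"
  and fst_vzero [simp]: "fst vzero i = 0"
  and snd_vzero [simp]: "snd vzero j = 0"
  by (simp_all add: vadd_def vsub_def vzero_def)

lemma vec_eqI: "(\<And>i. fst x i = fst y i) \<Longrightarrow> (\<And>j. snd x j = snd y j) \<Longrightarrow> x = y"
  by (cases x, cases y) auto

lemma mem_V_iff: "x \<in> V a b \<longleftrightarrow> (\<forall>i. if i < a then fst x i \<in> {0,1} else fst x i = 0) \<and>
    (\<forall>j. if j < b then snd x j \<in> {0,1,2,3} else snd x j = 0)"
  by (cases x) (simp add: V_def)

lemma V_fst_cases: "x \<in> V a b \<Longrightarrow> fst x i = 0 \<or> fst x i = 1"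
  by (auto simp: mem_V_iff split: if_splits dest!: spec[of _ i])

lemma V_snd_cases: "x \<in> V a b \<Longrightarrow> snd x j = 0 \<or> snd x j = 1 \<or> snd x j = 2 \<or> snd x j = 3"
  by (auto simp: mem_V_iff split: if_splits dest!: spec[of _ j])

lemma V_fst_outside: "x \<in> V a b \<Longrightarrow> \<not> i < a \<Longrightarrow> fst x i = 0"
  by (auto simp: mem_V_iff dest!: spec[of _ i])

lemma V_snd_outside: "x \<in> V a b \<Longrightarrow> \<not> j < b \<Longrightarrow> snd x j = 0"
  by (auto simp: mem_V_iff dest!: spec[of _ j])

lemma V_fst_mod: "x \<in> V a b \<Longrightarrow> fst x i mod 2 = fst x i"
  and V_snd_mod: "x \<in> V a b \<Longrightarrow> snd x j mod 4 = snd x j"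
  using V_fst_cases[of x a b i] V_snd_cases[of x a b j] by auto

lemma vzero_V [simp]: "vzero \<in> V a b"
  by (simp add: mem_V_iff)

lemma vadd_V: assumes "x \<in> V a b" "y \<in> V a b" shows "vadd x y \<in> V a b"
  unfolding mem_V_iff
proof (intro conjI allI)
  fix i j
  show "if i < a then fst (vadd x y) i \<in> {0, 1} else fst (vadd x y) i = 0"
    using assms[THEN V_fst_cases, of i] assms[THEN V_fst_outside, of i] by auto
  show "if j < b then snd (vadd x y) j \<in> {0, 1, 2, 3} else snd (vadd x y) j = 0"
    using assms[THEN V_snd_cases, of j] assms[THEN V_snd_outside, of j] by auto
qed

lemma vsub_V: assumes "x \<in> V a b" "y \<in> V a b" shows "vsub x y \<in> V a b"
  unfolding mem_V_iff
proof (intro conjI allI)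
  fix i j
  show "if i < a then fst (vsub x y) i \<in> {0, 1} else fst (vsub x y) i = 0"
    using assms[THEN V_fst_cases, of i] assms[THEN V_fst_outside, of i] by auto
  show "if j < b then snd (vsub x y) j \<in> {0, 1, 2, 3} else snd (vsub x y) j = 0"
    using assms[THEN V_snd_cases, of j] assms[THEN V_snd_outside, of j] by auto
qed

lemma vadd_commute: "vadd x y = vadd y x"
  by (simp add: vadd_def add.commute)

lemma vadd_assoc: "vadd (vadd x y) z = vadd x (vadd y z)"
  by (rule vec_eqI) (simp_all add: mod_add_left_eq mod_add_right_eq add.assoc)

lemma vadd_vzero [simp]: "x \<in> V a b \<Longrightarrow> vadd vzero x = x" "x \<in> V a b \<Longrightarrow> vadd x vzero = x"
  and vsub_vzero [simp]: "x \<in> V a b \<Longrightarrow> vsub x vzero = x"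
  by (auto intro!: vec_eqI simp: V_fst_mod V_snd_mod)

lemma vsub_self [simp]: "vsub x x = vzero"
  by (rule vec_eqI) simp_all

lemma vadd_vsub_cancel: "y \<in> V a b \<Longrightarrow> vadd (vsub y x) x = y"
  by (rule vec_eqI) (simp_all add: mod_add_left_eq V_fst_mod V_snd_mod)

lemma vsub_vadd_cancel: "y \<in> V a b \<Longrightarrow> vsub (vadd y x) x = y"
  by (rule vec_eqI) (simp_all add: mod_diff_left_eq V_fst_mod V_snd_mod)

lemma vsub_eq_vzero_iff: "x \<in> V a b \<Longrightarrow> y \<in> V a b \<Longrightarrow> vsub x y = vzero \<longleftrightarrow> x = y"
  by (metis vadd_vsub_cancel vadd_vzero(1) vsub_self)

lemma vadd_right_cancel: "x \<in> V a b \<Longrightarrow> y \<in> V a b \<Longrightarrow> vadd x z = vadd y z \<longleftrightarrow> x = y"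
  by (metis vsub_vadd_cancel)

lemma vadd_left_cancel: "x \<in> V a b \<Longrightarrow> y \<in> V a b \<Longrightarrow> vadd z x = vadd z y \<longleftrightarrow> x = y"
  by (metis vsub_vadd_cancel vadd_commute)

lemma vsub_eq_vadd_triple:
  assumes "y \<in> V a b" shows "vsub x y = vadd x (vadd y (vadd y y))"
proof (rule vec_eqI)
  fix i
  have "(fst x i - fst y i) mod 2 = (fst x i + (fst y i + (fst y i + fst y i) mod 2) mod 2) mod 2"
    using V_fst_cases[OF assms, of i] by (auto simp: mod_simps; presburger)
  then show "fst (vsub x y) i = fst (vadd x (vadd y (vadd y y))) i" by simp
next
  fix j
  have "(snd x j - snd y j) mod 4 = (snd x j + (snd y j + (snd y j + snd y j) mod 4) mod 4) mod 4"
    using V_snd_cases[OF assms, of j] by (auto simp: mod_simps; presburger)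
  then show "snd (vsub x y) j = snd (vadd x (vadd y (vadd y y))) j" by simp
qed

lemma double_vadd: "vadd (vadd x y) (vadd x y) = vadd (vadd x x) (vadd y y)"
  and double_vsub: "vadd (vsub x y) (vsub x y) = vsub (vadd x x) (vadd y y)"
  and vsub_vadd_vadd: "vsub (vadd x y) (vadd z w) = vadd (vsub x z) (vsub y w)"
  by (rule vec_eqI; simp add: mod_simps; simp add: algebra_simps)+

lemma vsub_vsub_cancel: "vsub (vsub x z) (vsub y z) = vsub x y"
  and vsub_vsub_vsub: "vsub y (vsub c (vsub x y)) = vsub x c"
  by (rule vec_eqI; simp add: mod_simps; simp add: algebra_simps)+

lemma vsub_vsub_self: "c \<in> V a b \<Longrightarrow> vsub v (vsub v c) = c"
  by (rule vec_eqI) (simp_all add: mod_simps V_fst_mod V_snd_mod)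

lemma mod2_mult_even_mod4:
  assumes "even (f::int)" shows "((x mod 2) * f) mod 4 = (x * f) mod 4"
proof -
  obtain g where g: "f = 2 * g" using assms by (auto elim!: evenE)
  have "(x mod 2) * f = x * f + 4 * (- (x div 2) * g)"
    by (simp add: g algebra_simps minus_div_mult_eq_mod[symmetric])
  then show ?thesis by (simp add: mod_eq_dvd_iff)
qed

definition funs_below :: "nat \<Rightarrow> int set \<Rightarrow> (nat \<Rightarrow> int) set" where
  "funs_below n S = {u. \<forall>i. if i < n then u i \<in> S else u i = 0}"

lemma bij_betw_funs_below_PiE:
  "bij_betw (\<lambda>u. restrict u {..<n}) (funs_below n S) (PiE {..<n} (\<lambda>_. S))"
proof (rule bij_betwI[where g = "\<lambda>f i. if i < n then f i else 0"])
  show "(\<lambda>u. restrict u {..<n}) \<in> funs_below n S \<rightarrow> PiE {..<n} (\<lambda>_. S)"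
    by (auto simp: funs_below_def dest!: spec)
  show "(\<lambda>f i. if i < n then f i else 0) \<in> PiE {..<n} (\<lambda>_. S) \<rightarrow> funs_below n S"
    by (auto simp: funs_below_def PiE_def Pi_def)
  show "(\<lambda>i. if i < n then restrict u {..<n} i else 0) = u" if "u \<in> funs_below n S" for u
    using that by (auto simp: funs_below_def fun_eq_iff dest!: spec)
  show "restrict (\<lambda>i. if i < n then f i else 0) {..<n} = f" if "f \<in> PiE {..<n} (\<lambda>_. S)" for f
    using that by (auto simp: PiE_def fun_eq_iff extensional_def)
qed

lemma finite_funs_below: "finite S \<Longrightarrow> finite (funs_below n S)"
  using bij_betw_finite[OF bij_betw_funs_below_PiE] by (simp add: finite_PiE)

lemma card_funs_below: "finite S \<Longrightarrow> card (funs_below n S) = card S ^ n"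
  using bij_betw_same_card[OF bij_betw_funs_below_PiE] by (simp add: card_PiE)

lemma V_eq_funs_below: "V a b = funs_below a {0,1} \<times> funs_below b {0,1,2,3}"
  by (auto simp: V_def funs_below_def)

lemma finite_V [simp]: "finite (V a b)"
  by (simp add: V_eq_funs_below finite_funs_below)

lemma card_V: "card (V a b) = 2 ^ (a + 2 * b)"
proof -
  have "card (V a b) = 2 ^ a * 4 ^ b"
    by (simp add: V_eq_funs_below card_cartesian_product card_funs_below eval_nat_numeral)
  then show ?thesis by (simp add: power_add power_mult)
qed

definition ord2 :: "nat \<Rightarrow> nat \<Rightarrow> z2z4vec set" where
  "ord2 a b = {x \<in> V a b. vadd x x = vzero}"

definition twoV :: "nat \<Rightarrow> nat \<Rightarrow> z2z4vec set" where
  "twoV a b = (\<lambda>v. vadd v v) ` V a b"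

lemma mem_ord2_iff: "x \<in> ord2 a b \<longleftrightarrow> x \<in> V a b \<and> (\<forall>j. even (snd x j))"
proof -
  have "vadd x x = vzero \<longleftrightarrow> (\<forall>j. even (snd x j))" if "x \<in> V a b"
  proof -
    have "vadd x x = vzero \<longleftrightarrow> (\<forall>j. (snd x j + snd x j) mod 4 = 0)"
      by (auto simp: vzero_def vadd_def fun_eq_iff prod_eq_iff)
    also have "\<dots> \<longleftrightarrow> (\<forall>j. even (snd x j))"
    proof -
      have "(snd x j + snd x j) mod 4 = 0 \<longleftrightarrow> even (snd x j)" for j
        using V_snd_cases[OF that, of j] by auto
      then show ?thesis by simp
    qed
    finally show ?thesis .
  qed
  then show ?thesis by (auto simp: ord2_def)
qed

lemma ord2_eq_funs_below: "ord2 a b = funs_below a {0,1} \<times> funs_below b {0,2}"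
proof (rule set_eqI)
  fix x :: z2z4vec
  obtain u u' where x: "x = (u, u')" by (cases x)
  have "((if j < b then u' j \<in> {0,1,2,3} else u' j = 0) \<and> even (u' j)) \<longleftrightarrow>
        (if j < b then u' j \<in> {0,2} else u' j = 0)" for j
    by auto
  then have "(\<forall>j. if j < b then u' j \<in> {0,1,2,3} else u' j = 0) \<and> (\<forall>j. even (u' j)) \<longleftrightarrow>
        u' \<in> funs_below b {0,2}"
    unfolding funs_below_def by (simp add: all_conj_distrib[symmetric])
  then show "x \<in> ord2 a b \<longleftrightarrow> x \<in> funs_below a {0,1} \<times> funs_below b {0,2}"
    by (simp add: mem_ord2_iff V_def funs_below_def[of a] x)
qed

lemma card_ord2: "card (ord2 a b) = 2 ^ (a + b)"
  by (simp add: ord2_eq_funs_below card_cartesian_product card_funs_below power_add eval_nat_numeral)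

lemma ord2_subset_V: "ord2 a b \<subseteq> V a b"
  by (auto simp: ord2_def)

lemma vzero_ord2 [simp]: "vzero \<in> ord2 a b"
  by (simp add: mem_ord2_iff)

lemma even_mod_4_iff: "even ((z::int) mod 4) \<longleftrightarrow> even z"
  by presburger

lemma vadd_ord2: "x \<in> ord2 a b \<Longrightarrow> y \<in> ord2 a b \<Longrightarrow> vadd x y \<in> ord2 a b"
  and vsub_ord2: "x \<in> ord2 a b \<Longrightarrow> y \<in> ord2 a b \<Longrightarrow> vsub x y \<in> ord2 a b"
  and double_ord2: "v \<in> V a b \<Longrightarrow> vadd v v \<in> ord2 a b"
  by (auto simp: mem_ord2_iff vadd_V vsub_V even_mod_4_iff)

lemma mem_twoV_iff: "x \<in> twoV a b \<longleftrightarrow> x \<in> ord2 a b \<and> fst x = (\<lambda>_. 0)"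
proof
  assume "x \<in> twoV a b"
  then obtain v where v: "v \<in> V a b" "x = vadd v v" by (auto simp: twoV_def)
  then show "x \<in> ord2 a b \<and> fst x = (\<lambda>_. 0)"
    using double_ord2 by (auto simp: fun_eq_iff)
next
  assume x: "x \<in> ord2 a b \<and> fst x = (\<lambda>_. 0)"
  then have xV: "x \<in> V a b" and ev: "even (snd x j)" for j
    by (auto simp: mem_ord2_iff)
  have s02: "snd x j = 0 \<or> snd x j = 2" for j
    using V_snd_cases[OF xV, of j] ev[of j] by auto
  define v :: z2z4vec where "v = ((\<lambda>_. 0), (\<lambda>j. snd x j div 2))"
  have "v \<in> V a b"
  proof -
    have "snd x j div 2 = 0 \<or> snd x j div 2 = 1" for j using s02[of j] by auto
    then show ?thesis
      unfolding v_def mem_V_iff using V_snd_outside[OF xV] by (auto split: if_splits)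
  qed
  moreover have "x = vadd v v"
  proof (rule vec_eqI)
    show "fst x i = fst (vadd v v) i" for i using x by (simp add: v_def)
    show "snd x j = snd (vadd v v) j" for j using s02[of j] by (auto simp: v_def)
  qed
  ultimately show "x \<in> twoV a b" by (auto simp: twoV_def)
qed

lemma twoV_eq_funs_below: "twoV a b = {\<lambda>_. 0} \<times> funs_below b {0,2}"
proof (rule set_eqI)
  fix x :: z2z4vec
  show "x \<in> twoV a b \<longleftrightarrow> x \<in> {\<lambda>_. 0} \<times> funs_below b {0,2}"
    by (cases x) (auto simp: mem_twoV_iff ord2_eq_funs_below funs_below_def)
qed

lemma card_twoV: "card (twoV a b) = 2 ^ b"
  by (simp add: twoV_eq_funs_below card_cartesian_product card_funs_below eval_nat_numeral)

lemma twoV_subset_ord2: "twoV a b \<subseteq> ord2 a b"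
  by (auto simp: mem_twoV_iff)

lemma vzero_twoV [simp]: "vzero \<in> twoV a b"
  by (simp add: mem_twoV_iff fun_eq_iff)

lemma vadd_twoV: "x \<in> twoV a b \<Longrightarrow> y \<in> twoV a b \<Longrightarrow> vadd x y \<in> twoV a b"
  and vsub_twoV: "x \<in> twoV a b \<Longrightarrow> y \<in> twoV a b \<Longrightarrow> vsub x y \<in> twoV a b"
  by (auto simp: mem_twoV_iff vadd_ord2 vsub_ord2 fun_eq_iff)

lemma additive_code_subset: "additive_code a b H \<Longrightarrow> H \<subseteq> V a b"
  and additive_code_vzero: "additive_code a b H \<Longrightarrow> vzero \<in> H"
  and additive_code_vadd: "additive_code a b H \<Longrightarrow> x \<in> H \<Longrightarrow> y \<in> H \<Longrightarrow> vadd x y \<in> H"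
  by (simp_all add: additive_code_def)

lemma additive_code_vsub:
  assumes H: "additive_code a b H" and "x \<in> H" "y \<in> H"
  shows "vsub x y \<in> H"
proof -
  have "y \<in> V a b" using assms additive_code_subset by blast
  then show ?thesis
    using assms additive_code_vadd[OF H] by (simp add: vsub_eq_vadd_triple)
qed

lemma additive_code_finite: "additive_code a b H \<Longrightarrow> finite H"
  using finite_subset[OF additive_code_subset finite_V] .

lemma additive_code_V: "additive_code a b (V a b)"
  and additive_code_ord2: "additive_code a b (ord2 a b)"
  by (auto simp: additive_code_def vadd_V vadd_ord2 ord2_subset_V)

text \<open>Each fibre of \<open>f\<close> is a translate of \<open>K\<close>.\<close>

lemma card_by_kernel:
  assumes UV: "U \<subseteq> V a b" and KV: "K \<subseteq> V a b" and fin: "finite U"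
    and translate: "\<And>x k. x \<in> U \<Longrightarrow> k \<in> K \<Longrightarrow> vadd k x \<in> U"
    and fibres: "\<And>x y. x \<in> U \<Longrightarrow> y \<in> U \<Longrightarrow> f x = f y \<longleftrightarrow> vsub x y \<in> K"
  shows "card U = card (f ` U) * card K"
proof -
  have fibre: "{y \<in> U. f y = f x} = (\<lambda>k. vadd k x) ` K" if x: "x \<in> U" for x
  proof (intro equalityI subsetI)
    fix y assume "y \<in> {y \<in> U. f y = f x}"
    then have "y \<in> U" "vsub y x \<in> K" using fibres[of y x] x by auto
    moreover have "y = vadd (vsub y x) x" using vadd_vsub_cancel[of y a b x] \<open>y \<in> U\<close> UV by auto
    ultimately show "y \<in> (\<lambda>k. vadd k x) ` K" by blast
  next
    fix y assume "y \<in> (\<lambda>k. vadd k x) ` K"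
    then obtain k where k: "k \<in> K" "y = vadd k x" by auto
    moreover have "vsub y x = k" using k vsub_vadd_cancel[of k a b x] KV by auto
    ultimately show "y \<in> {y \<in> U. f y = f x}" using translate fibres[of y x] x by auto
  qed
  have card_fibre: "card {y \<in> U. f y = z} = card K" if z: "z \<in> f ` U" for z
  proof -
    obtain x where x: "x \<in> U" "z = f x" using z by blast
    have "inj_on (\<lambda>k. vadd k x) K"
      by (rule inj_onI) (use KV vadd_right_cancel in blast)
    then show ?thesis using fibre[OF x(1)] x(2) by (simp add: card_image)
  qed
  have "card U = card (\<Union>z\<in>f ` U. {y \<in> U. f y = z})"
    by (rule arg_cong[where f = card]) auto
  also have "\<dots> = (\<Sum>z\<in>f ` U. card {y \<in> U. f y = z})"
    by (rule card_UN_disjoint) (use fin in auto)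
  finally show ?thesis using card_fibre by simp
qed

lemma two_power_factor:
  fixes x :: nat assumes "2 ^ N = 2 ^ M * x" "x \<noteq> 0"
  shows "M \<le> N" "x = 2 ^ (N - M)"
proof -
  have "(2::nat) ^ M \<le> 2 ^ N" using assms by simp
  then show MN: "M \<le> N" by simp
  then have "(2::nat) ^ N = 2 ^ M * 2 ^ (N - M)" by (simp add: power_add[symmetric])
  then show "x = 2 ^ (N - M)" using assms by simp
qed

lemma two_power_factor_card:
  assumes "2 ^ N = 2 ^ M * card X" "vzero \<in> X" "X \<subseteq> V a b"
  shows "M \<le> N" "card X = 2 ^ (N - M)"
  using two_power_factor[OF assms(1)] assms(2,3) finite_subset[OF assms(3) finite_V] by auto

section \<open>The Gray map and Hamming balls\<close>

definition unit2 :: "nat \<Rightarrow> z2z4vec" where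
  "unit2 i = ((\<lambda>l. if l = i then 1 else 0), (\<lambda>_. 0))"

definition unit4 :: "nat \<Rightarrow> int \<Rightarrow> z2z4vec" where
  "unit4 j k = ((\<lambda>_. 0), (\<lambda>l. if l = j then k else 0))"

lemma fst_unit2 [simp]: "fst (unit2 i) l = (if l = i then 1 else 0)"
  and snd_unit2 [simp]: "snd (unit2 i) l = 0"
  and fst_unit4 [simp]: "fst (unit4 j k) l = 0"
  and snd_unit4 [simp]: "snd (unit4 j k) l = (if l = j then k else 0)"
  by (simp_all add: unit2_def unit4_def)

lemma double_unit2: "vadd (unit2 i) (unit2 i) = vzero"
  and double_unit4: "vadd (unit4 j 2) (unit4 j 2) = vzero"
  by (rule vec_eqI; simp)+

text \<open>\<open>gray_ball a b\<close> consists of the vectors whose Gray image has weight at most 1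
  (see \<open>hdist_Phi_le1_iff\<close>); \<open>bin_ball a\<close> is its part in Z2^a.\<close>

definition gray_ball :: "nat \<Rightarrow> nat \<Rightarrow> z2z4vec set" where
  "gray_ball a b = insert vzero (unit2 ` {..<a} \<union> (\<lambda>(j, k). unit4 j k) ` ({..<b} \<times> {1, 3}))"

definition bin_ball :: "nat \<Rightarrow> z2z4vec set" where
  "bin_ball a = insert vzero (unit2 ` {..<a})"

lemma gray_ball_subset_V: "gray_ball a b \<subseteq> V a b"
  by (auto simp: gray_ball_def mem_V_iff)

lemma bin_ball_subset_gray_ball: "bin_ball a \<subseteq> gray_ball a b"
  by (auto simp: bin_ball_def gray_ball_def)

lemma bin_ball_subset_ord2: "bin_ball a \<subseteq> ord2 a b"
  by (auto simp: bin_ball_def mem_ord2_iff mem_V_iff)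

lemma unit4_gray_ball: "j < b \<Longrightarrow> k \<in> {1, 3} \<Longrightarrow> unit4 j k \<in> gray_ball a b"
  unfolding gray_ball_def by (intro insertI2 UnI2 image_eqI[where x = "(j, k)"]) auto

lemma inj_on_unit2: "inj_on unit2 A"
  by (rule inj_onI) (metis fst_unit2 zero_neq_one)

lemma unit2_neq_vzero: "unit2 i \<noteq> vzero"
  by (metis fst_unit2 fst_vzero one_neq_zero)

lemma unit4_neq_vzero: "k \<noteq> 0 \<Longrightarrow> unit4 j k \<noteq> vzero"
  by (metis snd_unit4 snd_vzero)

lemma unit2_neq_unit4: "unit2 i \<noteq> unit4 j k"
  by (metis fst_unit2 fst_unit4 one_neq_zero)

lemma vzero_notin_unit2_image: "vzero \<notin> unit2 ` A"
  using unit2_neq_vzero by (metis imageE)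

lemma card_bin_ball: "card (bin_ball a) = 1 + a"
  using card_image[OF inj_on_unit2, of "{..<a}"] vzero_notin_unit2_image[of "{..<a}"]
  by (simp add: bin_ball_def)

lemma card_gray_ball: "card (gray_ball a b) = 1 + a + 2 * b"
proof -
  define A where "A = unit2 ` {..<a}"
  define B where "B = (\<lambda>(j, k). unit4 j k) ` ({..<b} \<times> {1::int, 3})"
  have inj4: "inj_on (\<lambda>(j, k). unit4 j k) ({..<b} \<times> {1::int, 3})"
  proof (rule inj_onI)
    fix p q assume p: "p \<in> {..<b} \<times> {1::int, 3}" and q: "q \<in> {..<b} \<times> {1::int, 3}"
      and eq: "(\<lambda>(j, k). unit4 j k) p = (\<lambda>(j, k). unit4 j k) q"
    obtain j k j' k' where pq: "p = (j, k)" "q = (j', k')" by fastforce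
    have "snd (unit4 j k) j = snd (unit4 j' k') j" "snd (unit4 j k) j' = snd (unit4 j' k') j'"
      using eq pq by auto
    then show "p = q" using p q pq by (auto split: if_splits)
  qed
  have "A \<inter> B = {}"
    by (auto simp: A_def B_def unit2_neq_unit4 unit2_neq_unit4[symmetric])
  moreover have "vzero \<notin> A"
    by (simp add: A_def vzero_notin_unit2_image)
  moreover have "vzero \<notin> B"
  proof
    assume "vzero \<in> B"
    then obtain j k where "k \<in> {1, 3}" "vzero = unit4 j k" by (auto simp: B_def)
    then show False using unit4_neq_vzero[of k j] by auto
  qed
  moreover have "card A = a" "card B = 2 * b"
    using card_image[OF inj_on_unit2] card_image[OF inj4] by (simp_all add: A_def B_def card_cartesian_product)
  moreover have "gray_ball a b = insert vzero (A \<union> B)"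
    by (simp add: gray_ball_def A_def B_def)
  ultimately show ?thesis
    by (simp add: card_Un_disjoint A_def B_def)
qed

lemma Phi_less: "i < a \<Longrightarrow> Phi a x i = fst x i"
  and Phi_even: "Phi a x (a + 2 * j) = gray1 (snd x j)"
  and Phi_odd: "Phi a x (Suc (a + 2 * j)) = gray2 (snd x j)"
  by (simp_all add: Phi_def)

lemma Phi_BV: assumes x: "x \<in> V a b" shows "Phi a x \<in> BV (a + 2 * b)"
  unfolding BV_def
proof (intro CollectI allI)
  fix i
  show "if i < a + 2 * b then Phi a x i \<in> {0, 1} else Phi a x i = 0"
  proof (cases "i < a")
    case True then show ?thesis using V_fst_cases[OF x, of i] by (auto simp: Phi_less)
  next
    case False
    then have "snd x ((i - a) div 2) = 0" if "\<not> i < a + 2 * b" using V_snd_outside[OF x] that by auto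
    then show ?thesis using False by (auto simp: Phi_def gray1_def gray2_def)
  qed
qed

lemma inj_on_Phi: "inj_on (Phi a) (V a b)"
proof (rule inj_onI)
  fix x y assume x: "x \<in> V a b" and y: "y \<in> V a b" and eq: "Phi a x = Phi a y"
  show "x = y"
  proof (rule vec_eqI)
    show "fst x i = fst y i" for i
      using eq V_fst_outside[OF x, of i] V_fst_outside[OF y, of i] Phi_less[of i a x] Phi_less[of i a y]
      by (cases "i < a") auto
    show "snd x j = snd y j" for j
    proof -
      have "gray1 (snd x j) = gray1 (snd y j)" "gray2 (snd x j) = gray2 (snd y j)"
        using eq by (metis Phi_even, metis Phi_odd)
      then show ?thesis using V_snd_cases[OF x, of j] V_snd_cases[OF y, of j]
        by (auto simp: gray1_def gray2_def)
    qed
  qed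
qed

text \<open>The Gray map turns the Lee metric of Z4 into the Hamming metric: a difference \<open>0\<close>
  changes no bit, a difference \<open>2\<close> changes both bits, and \<open>\<plusminus>1\<close> changes exactly one.\<close>

lemma snd_vsub_Gray:
  assumes "x \<in> V a b" "y \<in> V a b"
  shows "snd (vsub x y) j = 0 \<longleftrightarrow> gray1 (snd x j) = gray1 (snd y j) \<and> gray2 (snd x j) = gray2 (snd y j)"
    and "snd (vsub x y) j = 2 \<longleftrightarrow> gray1 (snd x j) \<noteq> gray1 (snd y j) \<and> gray2 (snd x j) \<noteq> gray2 (snd y j)"
  using V_snd_cases[OF assms(1), of j] V_snd_cases[OF assms(2), of j] by (auto simp: gray1_def gray2_def)

definition gray_diffs :: "nat \<Rightarrow> nat \<Rightarrow> z2z4vec \<Rightarrow> z2z4vec \<Rightarrow> nat set" where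
  "gray_diffs a b x y = {p. p < a + 2 * b \<and> Phi a x p \<noteq> Phi a y p}"

lemma hdist_Phi_eq_card_gray_diffs: "hdist (a + 2 * b) (Phi a x) (Phi a y) = card (gray_diffs a b x y)"
  by (simp add: hdist_def gray_diffs_def)

lemma finite_gray_diffs: "finite (gray_diffs a b x y)"
  by (simp add: gray_diffs_def)

lemma mem_gray_diffs_Z2:
  "x \<in> V a b \<Longrightarrow> y \<in> V a b \<Longrightarrow> i < a \<Longrightarrow> i \<in> gray_diffs a b x y \<longleftrightarrow> fst (vsub x y) i \<noteq> 0"
  using V_fst_cases[of x a b i] V_fst_cases[of y a b i] by (auto simp: gray_diffs_def Phi_less)

lemma mem_gray_diffs_Z4:
  "j < b \<Longrightarrow> a + 2 * j \<in> gray_diffs a b x y \<longleftrightarrow> gray1 (snd x j) \<noteq> gray1 (snd y j)"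
  "j < b \<Longrightarrow> Suc (a + 2 * j) \<in> gray_diffs a b x y \<longleftrightarrow> gray2 (snd x j) \<noteq> gray2 (snd y j)"
  by (auto simp: gray_diffs_def Phi_even Phi_odd)

lemma gray_diffs_subset:
  "gray_diffs a b x y \<subseteq> {i. i < a \<and> fst (vsub x y) i \<noteq> 0} \<union>
    (\<Union>j\<in>{j. j < b \<and> snd (vsub x y) j \<noteq> 0}. {a + 2 * j, Suc (a + 2 * j)})"
  if "x \<in> V a b" "y \<in> V a b"
proof
  fix p assume p: "p \<in> gray_diffs a b x y"
  show "p \<in> {i. i < a \<and> fst (vsub x y) i \<noteq> 0} \<union>
    (\<Union>j\<in>{j. j < b \<and> snd (vsub x y) j \<noteq> 0}. {a + 2 * j, Suc (a + 2 * j)})"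
  proof (cases "p < a")
    case True then show ?thesis using p mem_gray_diffs_Z2[OF that True] by blast
  next
    case False
    define j where "j = (p - a) div 2"
    have "p < a + 2 * b" using p by (simp add: gray_diffs_def)
    then have "j < b" using False unfolding j_def by linarith
    moreover have pj: "p = a + 2 * j \<or> p = Suc (a + 2 * j)" using False unfolding j_def by presburger
    moreover have "snd (vsub x y) j \<noteq> 0"
      using p pj mem_gray_diffs_Z4[OF \<open>j < b\<close>, of a x y] snd_vsub_Gray(1)[OF that, of j] by auto
    ultimately show ?thesis by blast
  qed
qed

lemma vsub_eq_unit2_if_gray_diffs:
  assumes x: "x \<in> V a b" and y: "y \<in> V a b" and D: "gray_diffs a b x y \<subseteq> {i}"
    and i: "i < a" "fst (vsub x y) i \<noteq> 0"
  shows "vsub x y = unit2 i"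
proof (rule vec_eqI)
  have dV: "vsub x y \<in> V a b" using vsub_V[OF x y] .
  show "fst (vsub x y) l = fst (unit2 i) l" for l
  proof (cases "l = i")
    case True then show ?thesis using i(2) V_fst_cases[OF dV, of i] by simp
  next
    case False
    then have "l \<notin> gray_diffs a b x y" using D by blast
    then show ?thesis
      using False mem_gray_diffs_Z2[OF x y, of l] V_fst_outside[OF dV, of l] by (cases "l < a") auto
  qed
  show "snd (vsub x y) j = snd (unit2 i) j" for j
  proof (cases "j < b")
    case True
    then have "a + 2 * j \<notin> gray_diffs a b x y" "Suc (a + 2 * j) \<notin> gray_diffs a b x y"
      using D i(1) by auto
    then show ?thesis using mem_gray_diffs_Z4[OF True] snd_vsub_Gray(1)[OF x y] by simp
  qed (use V_snd_outside[OF dV] in simp)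
qed

lemma vsub_eq_unit4_if_gray_diffs:
  assumes x: "x \<in> V a b" and y: "y \<in> V a b" and D: "gray_diffs a b x y \<subseteq> {p}"
    and fst0: "\<And>i. fst (vsub x y) i = 0" and j: "j < b" "snd (vsub x y) j \<noteq> 0"
  shows "\<exists>k\<in>{1, 3}. vsub x y = unit4 j k"
proof
  have dV: "vsub x y \<in> V a b" using vsub_V[OF x y] .
  obtain q where q: "q \<in> gray_diffs a b x y" "q = a + 2 * j \<or> q = Suc (a + 2 * j)"
    using j snd_vsub_Gray(1)[OF x y, of j] mem_gray_diffs_Z4[OF j(1), of a x y] by auto
  have other: "a + 2 * l \<notin> gray_diffs a b x y" "Suc (a + 2 * l) \<notin> gray_diffs a b x y"
    if "l \<noteq> j" for l
  proof -
    have "a + 2 * l \<noteq> q" "Suc (a + 2 * l) \<noteq> q" using q(2) that by presburger+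
    then show "a + 2 * l \<notin> gray_diffs a b x y" "Suc (a + 2 * l) \<notin> gray_diffs a b x y"
      using D q(1) by blast+
  qed
  show "vsub x y = unit4 j (snd (vsub x y) j)"
  proof (rule vec_eqI)
    show "snd (vsub x y) l = snd (unit4 j (snd (vsub x y) j)) l" for l
    proof (cases "l \<noteq> j \<and> l < b")
      case True
      then show ?thesis using other[of l] mem_gray_diffs_Z4[of l b] snd_vsub_Gray(1)[OF x y, of l] by auto
    qed (use V_snd_outside[OF dV, of l] in auto)
  qed (use fst0 in simp)
  have "\<not> (a + 2 * j \<in> gray_diffs a b x y \<and> Suc (a + 2 * j) \<in> gray_diffs a b x y)"
  proof
    assume "a + 2 * j \<in> gray_diffs a b x y \<and> Suc (a + 2 * j) \<in> gray_diffs a b x y"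
    then have "a + 2 * j = p" "Suc (a + 2 * j) = p" using D by blast+
    then show False by simp
  qed
  then show "snd (vsub x y) j \<in> {1, 3}"
    using mem_gray_diffs_Z4[OF j(1)] snd_vsub_Gray(2)[OF x y, of j] V_snd_cases[OF dV, of j] j(2)
    by auto
qed

lemma vsub_gray_ball_if_hdist_le1:
  assumes x: "x \<in> V a b" and y: "y \<in> V a b"
    and close: "hdist (a + 2 * b) (Phi a x) (Phi a y) \<le> 1"
  shows "vsub x y \<in> gray_ball a b"
proof -
  have dV: "vsub x y \<in> V a b" using vsub_V[OF x y] .
  have "card (gray_diffs a b x y) \<le> Suc 0"
    using close by (simp add: hdist_Phi_eq_card_gray_diffs)
  then have "\<forall>p\<in>gray_diffs a b x y. \<forall>q\<in>gray_diffs a b x y. p = q"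
    using card_le_Suc0_iff_eq[OF finite_gray_diffs] by blast
  then obtain p where D: "gray_diffs a b x y \<subseteq> {p}"
    by (metis empty_subsetI insert_subset subsetI singletonI ex_in_conv)
  show ?thesis
  proof (cases "\<exists>i<a. fst (vsub x y) i \<noteq> 0")
    case True
    then obtain i where i: "i < a" "fst (vsub x y) i \<noteq> 0" by auto
    then have "gray_diffs a b x y \<subseteq> {i}" using D mem_gray_diffs_Z2[OF x y i(1)] by blast
    then show ?thesis
      using vsub_eq_unit2_if_gray_diffs[OF x y _ i] i(1) by (simp add: gray_ball_def)
  next
    case False
    then have fst0: "fst (vsub x y) i = 0" for i using V_fst_outside[OF dV, of i] by (cases "i < a") auto
    show ?thesis
    proof (cases "\<exists>j<b. snd (vsub x y) j \<noteq> 0")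
      case True
      then obtain j where j: "j < b" "snd (vsub x y) j \<noteq> 0" by auto
      then obtain k where "k \<in> {1, 3}" "vsub x y = unit4 j k"
        using vsub_eq_unit4_if_gray_diffs[OF x y D fst0] by blast
      then show ?thesis using unit4_gray_ball[OF j(1)] by simp
    next
      case False
      have "vsub x y = vzero"
      proof (rule vec_eqI)
        show "snd (vsub x y) j = snd vzero j" for j
          using False V_snd_outside[OF dV, of j] by (cases "j < b") auto
      qed (use fst0 in simp)
      then show ?thesis by (simp add: gray_ball_def)
    qed
  qed
qed

lemma hdist_le1_if_vsub_gray_ball:
  assumes x: "x \<in> V a b" and y: "y \<in> V a b" and d: "vsub x y \<in> gray_ball a b"
  shows "hdist (a + 2 * b) (Phi a x) (Phi a y) \<le> 1"
proof -
  let ?D = "gray_diffs a b x y"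
  have "\<exists>p. ?D \<subseteq> {p}"
    using d unfolding gray_ball_def
  proof (elim insertE UnE imageE)
    assume "vsub x y = vzero"
    then show ?thesis using gray_diffs_subset[OF x y] by auto
  next
    fix i assume "vsub x y = unit2 i"
    then show ?thesis using gray_diffs_subset[OF x y] by (auto split: if_splits)
  next
    fix jk assume jk: "jk \<in> {..<b} \<times> {1::int, 3}" "vsub x y = (\<lambda>(j, k). unit4 j k) jk"
    then obtain j k where j: "vsub x y = unit4 j k" "k = 1 \<or> k = 3" "j < b" by auto
    then have "?D \<subseteq> {a + 2 * j, Suc (a + 2 * j)}"
      using gray_diffs_subset[OF x y] by (auto split: if_splits)
    moreover have "\<not> (a + 2 * j \<in> ?D \<and> Suc (a + 2 * j) \<in> ?D)"
      using mem_gray_diffs_Z4[OF j(3)] snd_vsub_Gray(2)[OF x y, of j] j(1,2) by auto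
    ultimately show ?thesis by blast
  qed
  then obtain p where "?D \<subseteq> {p}" by blast
  then have "card ?D \<le> card {p}" by (intro card_mono) simp_all
  then show ?thesis by (simp add: hdist_Phi_eq_card_gray_diffs)
qed

lemma hdist_Phi_le1_iff:
  "x \<in> V a b \<Longrightarrow> y \<in> V a b \<Longrightarrow>
    hdist (a + 2 * b) (Phi a x) (Phi a y) \<le> 1 \<longleftrightarrow> vsub x y \<in> gray_ball a b"
  using vsub_gray_ball_if_hdist_le1 hdist_le1_if_vsub_gray_ball by blast

section \<open>Characters and the dual code\<close>

lemma sum_mod_cong:
  "(\<And>i. i \<in> A \<Longrightarrow> (f i :: int) mod n = g i mod n) \<Longrightarrow> sum f A mod n = sum g A mod n"
proof -
  assume "\<And>i. i \<in> A \<Longrightarrow> f i mod n = g i mod n"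
  then have "(\<Sum>i\<in>A. f i mod n) mod n = (\<Sum>i\<in>A. g i mod n) mod n" by (simp cong: sum.cong)
  then show ?thesis by (simp add: mod_sum_eq)
qed

lemma inner24_alt:
  "inner24 a b x y = ((\<Sum>i<a. 2 * fst x i * fst y i) + (\<Sum>j<b. snd x j * snd y j)) mod 4"
  by (simp add: inner24_def sum_distrib_left mult.assoc)

lemma inner24_commute: "inner24 a b x y = inner24 a b y x"
  by (simp add: inner24_def mult.commute)

lemma inner24_vadd_left: "inner24 a b (vadd x x') y = (inner24 a b x y + inner24 a b x' y) mod 4"
proof -
  have twice_mod2: "(2 * ((p::int) mod 2) * q) mod 4 = (2 * p * q) mod 4" for p q
    using mod2_mult_even_mod4[of "2 * q" p] by (simp add: ac_simps)
  have "inner24 a b (vadd x x') y =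
     ((\<Sum>i<a. 2 * ((fst x i + fst x' i) mod 2) * fst y i) + (\<Sum>j<b. ((snd x j + snd x' j) mod 4) * snd y j)) mod 4"
    by (simp add: inner24_alt)
  also have "\<dots> = ((\<Sum>i<a. 2 * (fst x i + fst x' i) * fst y i) + (\<Sum>j<b. (snd x j + snd x' j) * snd y j)) mod 4"
    by (intro mod_add_cong sum_mod_cong) (simp_all add: twice_mod2 mod_mult_left_eq)
  also have "\<dots> = ((\<Sum>i<a. 2 * fst x i * fst y i) + (\<Sum>j<b. snd x j * snd y j)
      + ((\<Sum>i<a. 2 * fst x' i * fst y i) + (\<Sum>j<b. snd x' j * snd y j))) mod 4"
    by (simp add: algebra_simps sum.distrib)
  also have "\<dots> = (inner24 a b x y + inner24 a b x' y) mod 4"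
    by (simp add: inner24_alt mod_add_eq)
  finally show ?thesis .
qed

lemma inner24_vadd_right: "inner24 a b x (vadd y y') = (inner24 a b x y + inner24 a b x y') mod 4"
  using inner24_vadd_left[of a b y y' x] inner24_commute by metis

lemma inner24_vzero [simp]: "inner24 a b vzero y = 0" "inner24 a b x vzero = 0"
  by (simp_all add: inner24_def)

lemma inner24_unit2: "i < a \<Longrightarrow> inner24 a b (unit2 i) y = (2 * fst y i) mod 4"
  by (simp add: inner24_def if_distrib[of "\<lambda>z. z * _"] sum.delta cong: if_cong)

lemma inner24_unit4: "j < b \<Longrightarrow> inner24 a b (unit4 j k) y = (k * snd y j) mod 4"
  by (simp add: inner24_def if_distrib[of "\<lambda>z. z * _"] sum.delta cong: if_cong)

lemma inner24_unit2_eq_0_iff: "y \<in> V a b \<Longrightarrow> i < a \<Longrightarrow> inner24 a b (unit2 i) y = 0 \<longleftrightarrow> fst y i = 0"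
  using V_fst_cases[of y a b i] by (auto simp: inner24_unit2)

lemma inner24_unit4_eq_0_iff: "y \<in> V a b \<Longrightarrow> j < b \<Longrightarrow> inner24 a b (unit4 j 2) y = 0 \<longleftrightarrow> even (snd y j)"
  using V_snd_cases[of y a b j] by (auto simp: inner24_unit4)

lemma inner24_ord2_twoV:
  assumes e: "e \<in> ord2 a b" and y: "y \<in> twoV a b"
  shows "inner24 a b e y = 0"
proof -
  have "4 dvd (\<Sum>j<b. snd e j * snd y j)"
  proof (rule dvd_sum)
    fix j
    have "even (snd e j)" "even (snd y j)" using e y by (auto simp: mem_twoV_iff mem_ord2_iff)
    then show "4 dvd snd e j * snd y j" by (auto elim!: evenE)
  qed
  then show ?thesis using y by (simp add: inner24_alt mem_twoV_iff)
qed

text \<open>The characters of Z2^a \<times> Z4^b are \<open>x \<mapsto> \<i> ^ inner24 a b x y\<close>.\<close>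

definition ipow :: "int \<Rightarrow> complex" where
  "ipow z = \<i> ^ nat (z mod 4)"

lemma ipow_add: "ipow (z + w) = ipow z * ipow w"
proof -
  have i_pow_mod: "\<i> ^ m = \<i> ^ (m mod 4)" for m
  proof -
    have "\<i> ^ m = (\<i> ^ 4) ^ (m div 4) * \<i> ^ (m mod 4)"
      by (simp only: power_mult[symmetric] power_add[symmetric] mult_div_mod_eq)
    then show ?thesis by simp
  qed
  have "(z + w) mod 4 = int ((nat (z mod 4) + nat (w mod 4)) mod 4)"
    by (simp add: mod_add_eq zmod_int)
  then have "nat ((z + w) mod 4) = (nat (z mod 4) + nat (w mod 4)) mod 4" by simp
  then show ?thesis unfolding ipow_def using i_pow_mod by (simp add: power_add)
qed

lemma ipow_mod [simp]: "ipow (z mod 4) = ipow z"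
  and ipow_0 [simp]: "ipow 0 = 1"
  by (simp_all add: ipow_def)

lemma ipow_neq_1: "z mod 4 \<noteq> 0 \<Longrightarrow> ipow z \<noteq> 1"
proof -
  assume "z mod 4 \<noteq> 0"
  then have "z mod 4 = 1 \<or> z mod 4 = 2 \<or> z mod 4 = 3" by auto
  then show ?thesis unfolding ipow_def by (auto simp: eval_nat_numeral complex_eq_iff)
qed

lemma ipow_inner24_vadd_left:
  "ipow (inner24 a b (vadd x x') y) = ipow (inner24 a b x y) * ipow (inner24 a b x' y)"
  and ipow_inner24_vadd_right:
  "ipow (inner24 a b x (vadd y y')) = ipow (inner24 a b x y) * ipow (inner24 a b x y')"
  by (simp_all add: inner24_vadd_left inner24_vadd_right ipow_add)

lemma sum_additive_code_translate:
  assumes H: "additive_code a b H" and x0: "x0 \<in> H"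
  shows "sum f H = (\<Sum>x\<in>H. f (vadd x0 x))"
proof -
  have inj: "inj_on (vadd x0) H"
    by (rule inj_onI) (use additive_code_subset[OF H] vadd_left_cancel in blast)
  have "vadd x0 ` H \<subseteq> H" using additive_code_vadd[OF H x0] by auto
  then have "vadd x0 ` H = H"
    using card_subset_eq[OF additive_code_finite[OF H]] card_image[OF inj] by blast
  then show ?thesis using sum.reindex[OF inj, of f] by simp
qed

lemma sum_character_eq_0:
  assumes H: "additive_code a b H" and x0: "x0 \<in> H" and nontrivial: "ipow (\<chi> x0) \<noteq> 1"
    and hom: "\<And>x x'. ipow (\<chi> (vadd x x')) = ipow (\<chi> x) * ipow (\<chi> x')"
  shows "(\<Sum>x\<in>H. ipow (\<chi> x)) = 0"
proof -
  define S where "S = (\<Sum>x\<in>H. ipow (\<chi> x))"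
  have "S = (\<Sum>x\<in>H. ipow (\<chi> (vadd x0 x)))"
    unfolding S_def by (rule sum_additive_code_translate[OF H x0])
  also have "\<dots> = ipow (\<chi> x0) * S" unfolding S_def by (simp add: hom sum_distrib_left)
  finally have "(1 - ipow (\<chi> x0)) * S = 0" by (simp add: algebra_simps)
  then show ?thesis using nontrivial by (simp add: S_def)
qed

lemma exists_inner24_neq_0:
  assumes x: "x \<in> V a b" and "x \<noteq> vzero"
  shows "\<exists>y\<in>V a b. inner24 a b x y \<noteq> 0"
proof (cases "\<exists>i<a. fst x i \<noteq> 0")
  case True
  then obtain i where i: "i < a" "fst x i \<noteq> 0" by auto
  then have "inner24 a b x (unit2 i) = 2"
    using V_fst_cases[OF x, of i] inner24_unit2[of i a b x] by (simp add: inner24_commute)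
  moreover have "unit2 i \<in> V a b" using i by (auto simp: mem_V_iff)
  ultimately show ?thesis by force
next
  case False
  then have f0: "fst x i = 0" for i using V_fst_outside[OF x, of i] by (cases "i < a") auto
  obtain j where j: "snd x j \<noteq> 0"
  proof (rule ccontr)
    assume "\<not> thesis"
    then have "x = vzero" using f0 that by (intro vec_eqI) auto
    then show False using \<open>x \<noteq> vzero\<close> by simp
  qed
  then have "j < b" using V_snd_outside[OF x, of j] by auto
  then have "inner24 a b x (unit4 j 1) = snd x j"
    using inner24_unit4[of j b a 1 x] V_snd_mod[OF x] by (simp add: inner24_commute)
  moreover have "unit4 j 1 \<in> V a b" using \<open>j < b\<close> by (auto simp: mem_V_iff)
  ultimately show ?thesis using j by force
qed

lemma additive_code_dual: "additive_code a b (dual a b H)"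
  unfolding additive_code_def dual_def by (auto simp: vadd_V inner24_vadd_right)

lemma dual_antimono: "A \<subseteq> B \<Longrightarrow> dual a b B \<subseteq> dual a b A"
  by (auto simp: dual_def)

text \<open>Double counting of \<open>\<Sum>x\<in>H. \<Sum>y\<in>V. \<i> ^ inner24 x y\<close>, using orthogonality in both variables.\<close>

lemma card_mult_card_dual:
  assumes H: "additive_code a b H"
  shows "card H * card (dual a b H) = card (V a b)"
proof -
  have HV: "H \<subseteq> V a b" using additive_code_subset[OF H] .
  have rows: "(\<Sum>x\<in>H. ipow (inner24 a b x y)) = (if y \<in> dual a b H then of_nat (card H) else 0)"
    if y: "y \<in> V a b" for y
  proof (cases "y \<in> dual a b H")
    case False
    then obtain x0 where x0: "x0 \<in> H" "inner24 a b x0 y \<noteq> 0" using y by (auto simp: dual_def)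
    have "(\<Sum>x\<in>H. ipow (inner24 a b x y)) = 0"
      using x0 by (intro sum_character_eq_0[OF H x0(1)] ipow_neq_1 ipow_inner24_vadd_left)
        (simp add: inner24_def)
    then show ?thesis using False by simp
  qed (simp add: dual_def)
  have cols: "(\<Sum>y\<in>V a b. ipow (inner24 a b x y)) = (if x = vzero then of_nat (card (V a b)) else 0)"
    if x: "x \<in> V a b" for x
  proof (cases "x = vzero")
    case False
    then obtain y0 where y0: "y0 \<in> V a b" "inner24 a b x y0 \<noteq> 0"
      using exists_inner24_neq_0[OF x] by blast
    have "(\<Sum>y\<in>V a b. ipow (inner24 a b x y)) = 0"
      using y0 by (intro sum_character_eq_0[OF additive_code_V y0(1)] ipow_neq_1 ipow_inner24_vadd_right)
        (simp add: inner24_def)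
    then show ?thesis using False by simp
  qed simp
  have "dual a b H \<subseteq> V a b" by (auto simp: dual_def)
  then have "(of_nat (card (dual a b H) * card H) :: complex) =
      (\<Sum>y\<in>V a b. if y \<in> dual a b H then of_nat (card H) else 0)"
    by (simp add: sum.If_cases Int_absorb1)
  also have "\<dots> = (\<Sum>y\<in>V a b. \<Sum>x\<in>H. ipow (inner24 a b x y))"
    by (rule sum.cong) (simp_all add: rows)
  also have "\<dots> = (\<Sum>x\<in>H. \<Sum>y\<in>V a b. ipow (inner24 a b x y))"
    by (rule sum.swap)
  also have "\<dots> = (\<Sum>x\<in>H. if x = vzero then of_nat (card (V a b)) else 0)"
    using HV by (intro sum.cong) (auto simp: cols)
  also have "\<dots> = of_nat (card (V a b))"
    using additive_code_vzero[OF H] additive_code_finite[OF H] by (simp add: sum.delta)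
  finally show ?thesis by (simp only: of_nat_eq_iff mult.commute)
qed

lemma card_dual_eq:
  assumes H: "additive_code a b H" and "card H = 2 ^ N"
  shows "card (dual a b H) = 2 ^ (a + 2 * b - N)"
proof -
  have "2 ^ (a + 2 * b) = 2 ^ N * card (dual a b H)"
    using card_mult_card_dual[OF H] assms(2) by (simp add: card_V)
  then show ?thesis
    using two_power_factor_card(2) additive_code_vzero[OF additive_code_dual]
      additive_code_subset[OF additive_code_dual] by blast
qed

section \<open>Bases of subgroups of exponent 2\<close>

text \<open>Subgroups of \<open>ord2 a b\<close> are vector spaces over Z2; a set of vectors is a basis when
  its subset sums are distinct and exhaust the subgroup.\<close>

definition vsum :: "z2z4vec set \<Rightarrow> z2z4vec" where
  "vsum S = ((\<lambda>i. (\<Sum>x\<in>S. fst x i) mod 2), (\<lambda>j. (\<Sum>x\<in>S. snd x j) mod 4))"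

definition vindep :: "z2z4vec set \<Rightarrow> bool" where
  "vindep B \<longleftrightarrow> inj_on vsum (Pow B)"

definition vspan :: "z2z4vec set \<Rightarrow> z2z4vec set" where
  "vspan B = vsum ` Pow B"

lemma vsum_empty [simp]: "vsum {} = vzero"
  by (simp add: vsum_def vzero_def)

lemma vsum_insert: "finite T \<Longrightarrow> x \<notin> T \<Longrightarrow> vsum (insert x T) = vadd x (vsum T)"
  by (rule vec_eqI) (simp_all add: vsum_def mod_simps)

lemma vsum_singleton: "x \<in> V a b \<Longrightarrow> vsum {x} = x"
  by (rule vec_eqI) (simp_all add: vsum_def V_fst_mod V_snd_mod)

lemma vsum_additive_code:
  assumes H: "additive_code a b H"
  shows "finite T \<Longrightarrow> T \<subseteq> H \<Longrightarrow> vsum T \<in> H"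
proof (induction T rule: finite_induct)
  case empty then show ?case using additive_code_vzero[OF H] by simp
next
  case (insert x T) then show ?case using vsum_insert additive_code_vadd[OF H] by auto
qed

lemma vadd_eq_vzero_iff_ord2:
  assumes u: "u \<in> ord2 a b" and v: "v \<in> ord2 a b"
  shows "vadd u v = vzero \<longleftrightarrow> u = v"
proof
  assume uv: "vadd u v = vzero"
  have uV: "u \<in> V a b" and vV: "v \<in> V a b" and uu: "vadd u u = vzero"
    using u v by (auto simp: ord2_def)
  have "u = vadd u (vadd u v)" using uv uV by simp
  also have "\<dots> = vadd (vadd u u) v" by (simp add: vadd_assoc)
  also have "\<dots> = v" using uu vV by simp
  finally show "u = v" .
next
  assume "u = v" then show "vadd u v = vzero" using v by (simp add: ord2_def)
qed

lemma vadd_vsum_vsum: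
  assumes T: "finite T" "T \<subseteq> ord2 a b" and T': "finite T'" "T' \<subseteq> ord2 a b"
  shows "vadd (vsum T) (vsum T') = vsum ((T - T') \<union> (T' - T))"
proof (rule vec_eqI)
  fix i
  let ?f = "\<lambda>x::z2z4vec. fst x i"
  have "sum ?f T = sum ?f (T \<inter> T') + sum ?f (T - T')" using T by (simp add: sum.Int_Diff)
  moreover have "sum ?f T' = sum ?f (T \<inter> T') + sum ?f (T' - T)"
    using sum.Int_Diff[OF T'(1), of ?f T] by (simp add: Int_commute)
  moreover have "sum ?f ((T - T') \<union> (T' - T)) = sum ?f (T - T') + sum ?f (T' - T)"
    using T T' by (intro sum.union_disjoint) auto
  ultimately show "fst (vadd (vsum T) (vsum T')) i = fst (vsum ((T - T') \<union> (T' - T))) i"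
    by (simp add: vsum_def mod_simps; simp add: algebra_simps)
next
  fix j
  let ?f = "\<lambda>x::z2z4vec. snd x j"
  have "sum ?f T = sum ?f (T \<inter> T') + sum ?f (T - T')" using T by (simp add: sum.Int_Diff)
  moreover have "sum ?f T' = sum ?f (T \<inter> T') + sum ?f (T' - T)"
    using sum.Int_Diff[OF T'(1), of ?f T] by (simp add: Int_commute)
  moreover have "sum ?f ((T - T') \<union> (T' - T)) = sum ?f (T - T') + sum ?f (T' - T)"
    using T T' by (intro sum.union_disjoint) auto
  moreover have "even (sum ?f (T \<inter> T'))" using T by (intro dvd_sum) (auto simp: mem_ord2_iff)
  ultimately show "snd (vadd (vsum T) (vsum T')) j = snd (vsum ((T - T') \<union> (T' - T))) j"
    by (auto simp: vsum_def mod_simps elim!: evenE; simp add: algebra_simps)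
qed

lemma vindep_iff:
  assumes B: "finite B" "B \<subseteq> ord2 a b"
  shows "vindep B \<longleftrightarrow> (\<forall>T\<subseteq>B. vsum T = vzero \<longrightarrow> T = {})"
proof
  assume "vindep B"
  then show "\<forall>T\<subseteq>B. vsum T = vzero \<longrightarrow> T = {}"
    unfolding vindep_def by (metis Pow_iff empty_subsetI inj_onD vsum_empty)
next
  assume zero_sum: "\<forall>T\<subseteq>B. vsum T = vzero \<longrightarrow> T = {}"
  show "vindep B" unfolding vindep_def
  proof (rule inj_onI)
    fix T T' assume TT': "T \<in> Pow B" "T' \<in> Pow B" "vsum T = vsum T'"
    have fin: "finite T" "finite T'" and sub: "T \<subseteq> ord2 a b" "T' \<subseteq> ord2 a b"
      using TT' B finite_subset by auto
    have "vsum T \<in> ord2 a b" "vsum T' \<in> ord2 a b"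
      using vsum_additive_code[OF additive_code_ord2] fin sub by blast+
    then have "vadd (vsum T) (vsum T') = vzero"
      using vadd_eq_vzero_iff_ord2 TT'(3) by simp
    then have "vsum ((T - T') \<union> (T' - T)) = vzero"
      using vadd_vsum_vsum[OF fin(1) sub(1) fin(2) sub(2)] by simp
    moreover have "(T - T') \<union> (T' - T) \<subseteq> B" using TT' by auto
    ultimately have "(T - T') \<union> (T' - T) = {}" using zero_sum by blast
    then show "T = T'" by blast
  qed
qed

lemma card_vspan: "finite B \<Longrightarrow> vindep B \<Longrightarrow> card (vspan B) = 2 ^ card B"
  by (simp add: vspan_def vindep_def card_image card_Pow)

lemma subset_vspan: "B \<subseteq> V a b \<Longrightarrow> B \<subseteq> vspan B"
proof
  fix x assume "B \<subseteq> V a b" "x \<in> B"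
  then have "x = vsum {x}" "{x} \<in> Pow B" using vsum_singleton[of x a b] by auto
  then show "x \<in> vspan B" unfolding vspan_def by (rule image_eqI)
qed

lemma vspan_subset:
  assumes H: "additive_code a b H" and BH: "B \<subseteq> H" shows "vspan B \<subseteq> H"
proof
  fix y assume "y \<in> vspan B"
  then obtain T where T: "T \<subseteq> B" "y = vsum T" by (auto simp: vspan_def)
  have TH: "T \<subseteq> H" using T(1) BH by (rule order.trans)
  then have "finite T" using additive_code_finite[OF H] finite_subset by blast
  then show "y \<in> H" using vsum_additive_code[OF H _ TH] T(2) by simp
qed

lemma vindep_insert:
  assumes B: "finite B" "B \<subseteq> ord2 a b" "vindep B" and x: "x \<in> ord2 a b" "x \<notin> vspan B"
  shows "vindep (insert x B)"
proof -
  have "B \<subseteq> vspan B" using subset_vspan B(2) ord2_subset_V by (meson order.trans)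
  then have xB: "x \<notin> B" using x(2) by blast
  have fin: "finite (insert x B)" "insert x B \<subseteq> ord2 a b" using B x by auto
  show ?thesis unfolding vindep_iff[OF fin]
  proof (intro allI impI)
    fix T assume T: "T \<subseteq> insert x B" "vsum T = vzero"
    have finT: "finite T" using finite_subset[OF T(1) fin(1)] .
    show "T = {}"
    proof (cases "x \<in> T")
      case True
      have sub: "T - {x} \<subseteq> B" using T(1) by auto
      have "vadd x (vsum (T - {x})) = vzero"
        using T(2) vsum_insert[of "T - {x}" x] finT True by (simp add: insert_absorb)
      moreover have "vsum (T - {x}) \<in> ord2 a b"
        using vsum_additive_code[OF additive_code_ord2] finT sub B(2) by blast
      ultimately have "x = vsum (T - {x})" using vadd_eq_vzero_iff_ord2[OF x(1)] by simp
      then have "x \<in> vspan B" using sub by (auto simp: vspan_def)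
      then show ?thesis using x(2) by simp
    next
      case False
      then have "T \<subseteq> B" using T(1) by auto
      then show ?thesis using B(3) vindep_iff[OF B(1,2)] T(2) by blast
    qed
  qed
qed

text \<open>A maximal independent extension spans, since any vector outside its span could be added.\<close>

lemma basis_extension:
  assumes P: "additive_code a b P" "P \<subseteq> ord2 a b" and B0: "B0 \<subseteq> P" "vindep B0"
  shows "\<exists>B. B0 \<subseteq> B \<and> B \<subseteq> P \<and> vindep B \<and> vspan B = P"
proof -
  define F where "F = {B. B0 \<subseteq> B \<and> B \<subseteq> P \<and> vindep B}"
  have "F \<subseteq> Pow P" by (auto simp: F_def)
  then have "finite F" using additive_code_finite[OF P(1)] by (simp add: finite_subset)
  moreover have "B0 \<in> F" using B0 by (simp add: F_def)
  ultimately obtain B where B: "B \<in> F" and max: "\<forall>B'\<in>F. B \<subseteq> B' \<longrightarrow> B' = B"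
    using finite_has_maximal2[of F B0] by auto
  have BP: "B \<subseteq> P" and B0B: "B0 \<subseteq> B" and indep: "vindep B" using B by (simp_all add: F_def)
  have finB: "finite B" using finite_subset[OF BP additive_code_finite[OF P(1)]] .
  have BW: "B \<subseteq> ord2 a b" using BP P(2) by blast
  have B_span: "B \<subseteq> vspan B" using subset_vspan BW ord2_subset_V by (meson order.trans)
  have "P \<subseteq> vspan B"
  proof
    fix x assume "x \<in> P"
    show "x \<in> vspan B"
    proof (rule ccontr)
      assume x: "x \<notin> vspan B"
      have "x \<in> ord2 a b" using \<open>x \<in> P\<close> P(2) by blast
      then have "insert x B \<in> F"
        using vindep_insert[OF finB BW indep _ x] B0B BP \<open>x \<in> P\<close> by (auto simp: F_def)
      then have "insert x B = B" using max by auto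
      then show False using x B_span by blast
    qed
  qed
  then have "vspan B = P" using vspan_subset[OF P(1) BP] by blast
  then show ?thesis using B0B BP indep by blast
qed

section \<open>The structure of additive codes\<close>

definition vscale :: "int \<Rightarrow> z2z4vec \<Rightarrow> z2z4vec" where
  "vscale k x = ((\<lambda>i. (k * fst x i) mod 2), (\<lambda>j. (k * snd x j) mod 4))"

definition lincomb :: "(nat \<Rightarrow> z2z4vec) \<Rightarrow> (nat \<Rightarrow> int) \<Rightarrow> nat \<Rightarrow> z2z4vec" where
  "lincomb w c n = ((\<lambda>i. (\<Sum>k<n. c k * fst (w k) i) mod 2), (\<lambda>j. (\<Sum>k<n. c k * snd (w k) j) mod 4))"

lemma vscale_additive_code:
  assumes H: "additive_code a b H" and x: "x \<in> H" shows "vscale (int k) x \<in> H"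
proof (induction k)
  case 0 then show ?case using additive_code_vzero[OF H] by (simp add: vscale_def vzero_def)
next
  case (Suc k)
  have xV: "x \<in> V a b" using x additive_code_subset[OF H] by blast
  have "vscale (int (Suc k)) x = vadd (vscale (int k) x) x"
    by (rule vec_eqI) (simp_all add: vscale_def algebra_simps mod_simps V_fst_mod[OF xV] V_snd_mod[OF xV])
  then show ?case using Suc additive_code_vadd[OF H _ x] by simp
qed

lemma lincomb_0 [simp]: "lincomb w c 0 = vzero"
  by (simp add: lincomb_def vzero_def)

lemma lincomb_Suc: "lincomb w c (Suc n) = vadd (lincomb w c n) (vscale (c n) (w n))"
  by (rule vec_eqI) (simp_all add: lincomb_def vscale_def mod_simps)

lemma lincomb_cong:
  "(\<And>k. k < n \<Longrightarrow> w k = w' k) \<Longrightarrow> (\<And>k. k < n \<Longrightarrow> c k = c' k) \<Longrightarrow> lincomb w c n = lincomb w' c' n"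
  unfolding lincomb_def by (intro prod_eqI) (auto intro!: sum.cong)

lemma lincomb_additive_code:
  assumes H: "additive_code a b H"
  shows "(\<forall>k<n. w k \<in> H) \<Longrightarrow> (\<forall>k<n. 0 \<le> c k) \<Longrightarrow> lincomb w c n \<in> H"
proof (induction n)
  case 0 then show ?case using additive_code_vzero[OF H] by simp
next
  case (Suc n)
  have "c n = int (nat (c n))" using Suc.prems by simp
  then have "vscale (c n) (w n) \<in> H"
    using vscale_additive_code[OF H, of "w n" "nat (c n)"] Suc.prems by simp
  then show ?case using Suc additive_code_vadd[OF H] by (simp add: lincomb_Suc)
qed

lemma lincomb_add_mod4: "lincomb w (\<lambda>k. (c k + c' k) mod 4) n = vadd (lincomb w c n) (lincomb w c' n)"
proof (rule vec_eqI)
  fix i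
  have "(\<Sum>k<n. (c k + c' k) mod 4 * fst (w k) i) mod 2 = (\<Sum>k<n. (c k + c' k) * fst (w k) i) mod 2"
  proof (rule sum_mod_cong)
    fix k
    have "((c k + c' k) mod 4 * fst (w k) i) mod 2 = (((c k + c' k) mod 4) mod 2 * fst (w k) i) mod 2"
      by (simp add: mod_mult_left_eq)
    then show "((c k + c' k) mod 4 * fst (w k) i) mod 2 = ((c k + c' k) * fst (w k) i) mod 2"
      by (simp add: mod_mod_cancel mod_mult_left_eq)
  qed
  then show "fst (lincomb w (\<lambda>k. (c k + c' k) mod 4) n) i = fst (vadd (lincomb w c n) (lincomb w c' n)) i"
    by (simp add: lincomb_def mod_simps sum.distrib algebra_simps)
next
  fix j
  have "(\<Sum>k<n. (c k + c' k) mod 4 * snd (w k) j) mod 4 = (\<Sum>k<n. (c k + c' k) * snd (w k) j) mod 4"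
    by (rule sum_mod_cong) (simp add: mod_mult_left_eq)
  then show "snd (lincomb w (\<lambda>k. (c k + c' k) mod 4) n) j = snd (vadd (lincomb w c n) (lincomb w c' n)) j"
    by (simp add: lincomb_def mod_simps sum.distrib algebra_simps)
qed

lemma lincomb_mod2:
  assumes "\<forall>k<n. w k \<in> ord2 a b"
  shows "lincomb w c n = lincomb w (\<lambda>k. c k mod 2) n"
proof (rule vec_eqI)
  fix i
  have "(\<Sum>k<n. c k * fst (w k) i) mod 2 = (\<Sum>k<n. c k mod 2 * fst (w k) i) mod 2"
    by (rule sum_mod_cong) (simp add: mod_mult_left_eq)
  then show "fst (lincomb w c n) i = fst (lincomb w (\<lambda>k. c k mod 2) n) i" by (simp add: lincomb_def)
next
  fix j
  have "(\<Sum>k<n. c k * snd (w k) j) mod 4 = (\<Sum>k<n. c k mod 2 * snd (w k) j) mod 4"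
  proof (rule sum_mod_cong)
    fix k assume "k \<in> {..<n}"
    then have "even (snd (w k) j)" using assms by (auto simp: mem_ord2_iff)
    then show "(c k * snd (w k) j) mod 4 = (c k mod 2 * snd (w k) j) mod 4"
      by (simp add: mod2_mult_even_mod4)
  qed
  then show "snd (lincomb w c n) j = snd (lincomb w (\<lambda>k. c k mod 2) n) j" by (simp add: lincomb_def)
qed

lemma lincomb_add_mod2:
  assumes "\<forall>k<n. w k \<in> ord2 a b"
  shows "lincomb w (\<lambda>k. (c k + c' k) mod 2) n = vadd (lincomb w c n) (lincomb w c' n)"
proof -
  have "lincomb w (\<lambda>k. (c k + c' k) mod 2) n = lincomb w (\<lambda>k. (c k + c' k) mod 4 mod 2) n"
    by (simp add: mod_mod_cancel)
  also have "\<dots> = lincomb w (\<lambda>k. (c k + c' k) mod 4) n"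
    using lincomb_mod2[OF assms, of "\<lambda>k. (c k + c' k) mod 4"] by simp
  finally show ?thesis by (simp add: lincomb_add_mod4)
qed

lemma lincomb_double: "vadd (lincomb w c n) (lincomb w c n) = lincomb (\<lambda>k. vadd (w k) (w k)) c n"
proof (rule vec_eqI)
  fix i
  show "fst (vadd (lincomb w c n) (lincomb w c n)) i = fst (lincomb (\<lambda>k. vadd (w k) (w k)) c n) i"
    by (simp add: lincomb_def mod_simps)
next
  fix j
  have "(\<Sum>k<n. c k * ((snd (w k) j + snd (w k) j) mod 4)) mod 4 = (\<Sum>k<n. c k * (snd (w k) j + snd (w k) j)) mod 4"
    by (rule sum_mod_cong) (simp add: mod_mult_right_eq)
  moreover have "(\<Sum>k<n. c k * (snd (w k) j + snd (w k) j)) = 2 * (\<Sum>k<n. c k * snd (w k) j)"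
    by (simp add: sum_distrib_left algebra_simps)
  ultimately show "snd (vadd (lincomb w c n) (lincomb w c n)) j = snd (lincomb (\<lambda>k. vadd (w k) (w k)) c n) j"
    by (simp add: lincomb_def mod_simps)
qed

lemma lincomb_half:
  assumes "\<forall>k<n. c k = 2 * c' k"
  shows "lincomb w c n = lincomb (\<lambda>k. vadd (w k) (w k)) c' n"
proof (rule vec_eqI)
  fix i
  have "(\<Sum>k<n. c k * fst (w k) i) = 2 * (\<Sum>k<n. c' k * fst (w k) i)"
    using assms by (simp add: sum_distrib_left algebra_simps)
  then show "fst (lincomb w c n) i = fst (lincomb (\<lambda>k. vadd (w k) (w k)) c' n) i"
    by (simp add: lincomb_def)
next
  fix j
  have "(\<Sum>k<n. c k * snd (w k) j) = (\<Sum>k<n. c' k * (snd (w k) j + snd (w k) j))"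
    using assms by (intro sum.cong) (simp_all add: algebra_simps)
  moreover have "(\<Sum>k<n. c' k * ((snd (w k) j + snd (w k) j) mod 4)) mod 4 =
      (\<Sum>k<n. c' k * (snd (w k) j + snd (w k) j)) mod 4"
    by (rule sum_mod_cong) (simp add: mod_mult_right_eq)
  ultimately show "snd (lincomb w c n) j = snd (lincomb (\<lambda>k. vadd (w k) (w k)) c' n) j"
    by (simp add: lincomb_def)
qed

lemma lincomb_ord2_eq_vsum:
  assumes inj: "inj_on w {..<n}" and ord2: "\<forall>k<n. w k \<in> ord2 a b"
  shows "lincomb w c n = vsum (w ` {k. k < n \<and> odd (c k)})"
proof -
  define S where "S = {k. k < n \<and> odd (c k)}"
  have "(\<Sum>k<n. c k mod 2 * F k) = sum F S" for F :: "nat \<Rightarrow> int"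
  proof -
    have "sum F S = (\<Sum>k<n. if odd (c k) then F k else 0)"
      using sum.inter_filter[of "{..<n}" F "\<lambda>k. odd (c k)"] by (simp add: S_def)
    also have "\<dots> = (\<Sum>k<n. c k mod 2 * F k)" by (intro sum.cong) (auto simp: odd_iff_mod_2_eq_one)
    finally show ?thesis by simp
  qed
  moreover have "inj_on w S" using inj by (rule inj_on_subset) (auto simp: S_def)
  ultimately have "lincomb w (\<lambda>k. c k mod 2) n = vsum (w ` S)"
    by (intro vec_eqI) (simp_all add: lincomb_def vsum_def sum.reindex)
  then show ?thesis using lincomb_mod2[OF ord2] by (simp add: S_def)
qed

lemma iso_Z2Z4_if_injective_hom:
  assumes HV: "H \<subseteq> V a b" and finH: "finite H"
    and L_mem: "\<And>z. z \<in> V g d \<Longrightarrow> L z \<in> H"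
    and L_add: "\<And>z z'. z \<in> V g d \<Longrightarrow> z' \<in> V g d \<Longrightarrow> L (vadd z z') = vadd (L z) (L z')"
    and L_ker: "\<And>z. z \<in> V g d \<Longrightarrow> L z = vzero \<Longrightarrow> z = vzero"
    and card: "card H = card (V g d)"
  shows "iso_Z2Z4 H g d"
proof -
  have inj: "inj_on L (V g d)"
  proof (rule inj_onI)
    fix z z' assume z: "z \<in> V g d" and z': "z' \<in> V g d" and eq: "L z = L z'"
    define u where "u = vsub z z'"
    have uV: "u \<in> V g d" unfolding u_def using vsub_V[OF z z'] .
    have zu: "z = vadd u z'" unfolding u_def using vadd_vsub_cancel[OF z] by simp
    have "vadd (L u) (L z') = vadd vzero (L z')"
      using eq zu L_add[OF uV z'] HV L_mem[OF z'] by auto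
    moreover have "L u \<in> V a b" using L_mem[OF uV] HV by blast
    ultimately have "L u = vzero" using vadd_right_cancel[of "L u" a b vzero "L z'"] by simp
    then show "z = z'" using L_ker[OF uV] zu z' by simp
  qed
  have "L ` V g d = H"
    using L_mem card_image[OF inj] card by (intro card_subset_eq[OF finH]) auto
  then have bij: "bij_betw L (V g d) H" using inj by (simp add: bij_betw_def)
  define f where "f = the_inv_into (V g d) L"
  have f_bij: "bij_betw f H (V g d)" unfolding f_def by (rule bij_betw_the_inv_into[OF bij])
  have f_inv: "f x \<in> V g d" "L (f x) = x" if "x \<in> H" for x
    using that bij unfolding f_def by (auto simp: bij_betw_def f_the_inv_into_f the_inv_into_into)
  have "f (vadd x y) = vadd (f x) (f y)" if x: "x \<in> H" and y: "y \<in> H" for x y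
  proof -
    have "f (vadd x y) = f (L (vadd (f x) (f y)))"
      using L_add[OF f_inv(1)[OF x] f_inv(1)[OF y]] f_inv(2)[OF x] f_inv(2)[OF y] by simp
    also have "\<dots> = vadd (f x) (f y)"
      using the_inv_into_f_f[OF inj vadd_V[OF f_inv(1)[OF x] f_inv(1)[OF y]]] by (simp add: f_def)
    finally show ?thesis .
  qed
  then show ?thesis unfolding iso_Z2Z4_def using f_bij by blast
qed

lemma additive_code_Int: "additive_code a b H \<Longrightarrow> additive_code a b K \<Longrightarrow> additive_code a b (H \<inter> K)"
  by (auto simp: additive_code_def)

lemma additive_code_doubles:
  assumes H: "additive_code a b H" shows "additive_code a b ((\<lambda>x. vadd x x) ` H)"
  unfolding additive_code_def
proof (intro conjI ballI)
  show "(\<lambda>x. vadd x x) ` H \<subseteq> V a b" using additive_code_subset[OF H] vadd_V by blast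
  show "vzero \<in> (\<lambda>x. vadd x x) ` H"
    by (rule rev_image_eqI[OF additive_code_vzero[OF H]]) simp
  fix x y assume "x \<in> (\<lambda>x. vadd x x) ` H" "y \<in> (\<lambda>x. vadd x x) ` H"
  then obtain u v where uv: "u \<in> H" "v \<in> H" "x = vadd u u" "y = vadd v v" by blast
  show "vadd x y \<in> (\<lambda>x. vadd x x) ` H"
    by (rule rev_image_eqI[OF additive_code_vadd[OF H uv(1,2)]]) (simp add: uv(3,4) double_vadd)
qed

lemma card_eq_card_doubles:
  assumes H: "additive_code a b H"
  shows "card H = card ((\<lambda>x. vadd x x) ` H) * card (H \<inter> ord2 a b)"
proof (rule card_by_kernel[OF additive_code_subset[OF H]])
  show "H \<inter> ord2 a b \<subseteq> V a b" using ord2_subset_V by blast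
  show "finite H" using additive_code_finite[OF H] .
  show "vadd k x \<in> H" if "x \<in> H" "k \<in> H \<inter> ord2 a b" for x k
    using that additive_code_vadd[OF H] by blast
  show "vadd x x = vadd y y \<longleftrightarrow> vsub x y \<in> H \<inter> ord2 a b" if x: "x \<in> H" and y: "y \<in> H" for x y
  proof -
    have xV: "x \<in> V a b" and yV: "y \<in> V a b" using x y additive_code_subset[OF H] by auto
    have "vsub x y \<in> H \<inter> ord2 a b \<longleftrightarrow> vadd (vsub x y) (vsub x y) = vzero"
      using additive_code_vsub[OF H x y] vsub_V[OF xV yV] by (auto simp: ord2_def)
    also have "\<dots> \<longleftrightarrow> vadd x x = vadd y y"
      unfolding double_vsub by (rule vsub_eq_vzero_iff[OF vadd_V[OF xV xV] vadd_V[OF yV yV]])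
    finally show ?thesis by simp
  qed
qed

lemma lincomb_halves:
  assumes "\<And>k. k < n \<Longrightarrow> vadd (h k) (h k) = w k"
  shows "vadd (lincomb h c n) (lincomb h c n) = lincomb w c n"
    and "\<forall>k<n. even (c k) \<Longrightarrow> lincomb h c n = lincomb w (\<lambda>k. c k div 2) n"
proof -
  show "vadd (lincomb h c n) (lincomb h c n) = lincomb w c n"
    unfolding lincomb_double using assms by (intro lincomb_cong) auto
  assume "\<forall>k<n. even (c k)"
  then have "lincomb h c n = lincomb (\<lambda>k. vadd (h k) (h k)) (\<lambda>k. c k div 2) n"
    by (intro lincomb_half) auto
  also have "\<dots> = lincomb w (\<lambda>k. c k div 2) n" using assms by (intro lincomb_cong) auto
  finally show "lincomb h c n = lincomb w (\<lambda>k. c k div 2) n" .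
qed

lemma even_if_lincomb_eq_vzero:
  assumes Q: "finite Q" "Q \<subseteq> ord2 a b" "vindep Q"
    and w: "bij_betw w {..<n} W" "W \<subseteq> Q" and zero: "lincomb w c n = vzero"
  shows "\<forall>k<n. even (c k)"
proof -
  have w_mem: "w k \<in> W" if "k < n" for k using w(1) that by (auto simp: bij_betw_def)
  have "\<forall>k<n. w k \<in> ord2 a b" using subsetD[OF Q(2) subsetD[OF w(2) w_mem]] by blast
  then have "vsum (w ` {k. k < n \<and> odd (c k)}) = vzero"
    using lincomb_ord2_eq_vsum[of w n a b c] w(1) zero by (simp add: bij_betw_def)
  moreover have "w ` {k. k < n \<and> odd (c k)} \<subseteq> Q" using w_mem w(2) by blast
  ultimately have "w ` {k. k < n \<and> odd (c k)} = {}" using vindep_iff[OF Q(1,2)] Q(3) by blast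
  then show ?thesis by auto
qed

text \<open>Doubling \<open>\<Sum> e\<^sub>k hy\<^sub>k + \<Sum> c\<^sub>k xq\<^sub>k\<close> leaves \<open>\<Sum> c\<^sub>k hx\<^sub>k\<close>, so all \<open>c\<^sub>k\<close> are even;
  then the combination itself is a sum of distinct elements of the basis \<open>Q\<close>.\<close>

lemma lincomb_basis_eq_vzero_imp:
  assumes Q: "finite Q" "Q \<subseteq> ord2 a b" "vindep Q" and D: "D \<subseteq> Q"
    and hy: "bij_betw hy {..<g} (Q - D)" and hx: "bij_betw hx {..<d} D"
    and xq: "\<And>k. k < d \<Longrightarrow> xq k \<in> V a b \<and> vadd (xq k) (xq k) = hx k"
    and z: "z \<in> V g d"
    and zero: "vadd (lincomb hy (fst z) g) (lincomb xq (snd z) d) = vzero"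
  shows "z = vzero"
proof -
  have no_zero_sum: "T = {}" if "T \<subseteq> Q" "vsum T = vzero" for T
    using vindep_iff[OF Q(1,2)] Q(3) that by blast
  have hy_mem: "hy k \<in> Q - D" if "k < g" for k using hy that by (auto simp: bij_betw_def)
  have hx_mem: "hx k \<in> D" if "k < d" for k using hx that by (auto simp: bij_betw_def)
  have hy_ord2: "\<forall>k<g. hy k \<in> ord2 a b" using subsetD[OF Q(2) DiffD1[OF hy_mem]] by blast
  have hx_ord2: "\<forall>k<d. hx k \<in> ord2 a b" using subsetD[OF Q(2) subsetD[OF D hx_mem]] by blast
  have inj_hx: "inj_on hx {..<d}" and inj_hy: "inj_on hy {..<g}"
    using hx hy by (auto simp: bij_betw_def)
  have nonneg: "0 \<le> fst z k" "0 \<le> snd z k" for k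
    using V_fst_cases[OF z, of k] V_snd_cases[OF z, of k] by auto
  have halves: "\<And>k. k < d \<Longrightarrow> vadd (xq k) (xq k) = hx k" using xq by blast
  define A where "A = lincomb hy (fst z) g"
  define B where "B = lincomb xq (snd z) d"
  have "A \<in> ord2 a b"
    unfolding A_def using lincomb_additive_code[OF additive_code_ord2] hy_ord2 nonneg by blast
  then have A2: "vadd A A = vzero" by (simp add: ord2_def)
  have BV: "B \<in> V a b"
    unfolding B_def using lincomb_additive_code[OF additive_code_V] xq nonneg by blast
  have "vadd (vadd A A) (vadd B B) = vzero"
    using arg_cong[OF zero[folded A_def B_def], of "\<lambda>x. vadd x x"] by (simp add: double_vadd)
  then have "vadd B B = vzero" using A2 vadd_vzero(1)[OF vadd_V[OF BV BV]] by simp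
  then have "lincomb hx (snd z) d = vzero"
    using lincomb_halves(1)[OF halves, where c = "snd z"] unfolding B_def by simp
  then have snd_even: "\<forall>k<d. even (snd z k)" by (rule even_if_lincomb_eq_vzero[OF Q hx D])
  define S1 where "S1 = hy ` {k. k < g \<and> odd (fst z k)}"
  define S2 where "S2 = hx ` {k. k < d \<and> odd (snd z k div 2)}"
  have S1: "S1 \<subseteq> Q - D" "finite S1" using hy_mem by (auto simp: S1_def)
  have S2: "S2 \<subseteq> D" "finite S2" using hx_mem by (auto simp: S2_def)
  have "vsum (S1 \<union> S2) = vadd A B"
  proof -
    have "A = vsum S1" unfolding A_def S1_def by (rule lincomb_ord2_eq_vsum[OF inj_hy hy_ord2])
    moreover have "B = lincomb hx (\<lambda>k. snd z k div 2) d"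
      unfolding B_def by (rule lincomb_halves(2)[OF halves snd_even])
    then have "B = vsum S2" unfolding S2_def using lincomb_ord2_eq_vsum[OF inj_hx hx_ord2] by simp
    moreover have "(S1 - S2) \<union> (S2 - S1) = S1 \<union> S2" "S1 \<subseteq> ord2 a b" "S2 \<subseteq> ord2 a b"
      using S1(1) S2(1) D Q(2) by blast+
    ultimately show ?thesis using vadd_vsum_vsum[of S1 a b S2] S1(2) S2(2) by simp
  qed
  moreover have "S1 \<union> S2 \<subseteq> Q" using S1(1) S2(1) D by blast
  ultimately have "S1 \<union> S2 = {}" using zero by (intro no_zero_sum) (simp_all add: A_def B_def)
  then have fst_even: "\<forall>k<g. even (fst z k)" and snd_half_even: "\<forall>k<d. even (snd z k div 2)"
    by (auto simp: S1_def S2_def)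
  show "z = vzero"
  proof (rule vec_eqI)
    show "fst z k = fst vzero k" for k
      using fst_even V_fst_cases[OF z, of k] V_fst_outside[OF z, of k] by (cases "k < g") auto
    show "snd z k = snd vzero k" for k
      using snd_half_even snd_even V_snd_cases[OF z, of k] V_snd_outside[OF z, of k]
      by (cases "k < d") auto
  qed
qed

text \<open>The isomorphism sends the unit vectors to \<open>Q - D\<close> and to halves of the elements of \<open>D\<close>.\<close>

lemma iso_Z2Z4_if_basis:
  assumes H: "additive_code a b H"
    and Q: "finite Q" "Q \<subseteq> H \<inter> ord2 a b" "vindep Q"
    and D: "D \<subseteq> Q" "D \<subseteq> (\<lambda>x. vadd x x) ` H"
    and card: "card (Q - D) = g" "card D = d" "card H = 2 ^ (g + 2 * d)"
  shows "iso_Z2Z4 H g d"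
proof -
  obtain hy where hy: "bij_betw hy {..<g} (Q - D)"
    using ex_bij_betw_nat_finite[of "Q - D"] Q(1) card(1) by (auto simp: atLeast0LessThan)
  obtain hx where hx: "bij_betw hx {..<d} D"
    using ex_bij_betw_nat_finite[of D] finite_subset[OF D(1) Q(1)] card(2) by (auto simp: atLeast0LessThan)
  have hy_H: "hy k \<in> H" if "k < g" for k using hy that Q(2) by (auto simp: bij_betw_def)
  have hy_ord2: "\<forall>k<g. hy k \<in> ord2 a b" using hy Q(2) by (auto simp: bij_betw_def)
  have half_exists: "\<exists>x. x \<in> H \<and> vadd x x = hx k" if k: "k < d" for k
  proof -
    have "hx k \<in> D" using hx k by (auto simp: bij_betw_def)
    then obtain x where "x \<in> H" "hx k = vadd x x" using D(2) by blast
    then show ?thesis by (intro exI[of _ x]) simp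
  qed
  define xq where "xq k = (SOME x. x \<in> H \<and> vadd x x = hx k)" for k
  have xq: "xq k \<in> H \<and> vadd (xq k) (xq k) = hx k" if "k < d" for k
    unfolding xq_def by (rule someI_ex[OF half_exists[OF that]])
  define L where "L z = vadd (lincomb hy (fst z) g) (lincomb xq (snd z) d)" for z
  have nonneg: "0 \<le> fst z k" "0 \<le> snd z k" if "z \<in> V g d" for z k
    using V_fst_cases[OF that, of k] V_snd_cases[OF that, of k] by auto
  have L_mem: "L z \<in> H" if z: "z \<in> V g d" for z
  proof -
    have "lincomb hy (fst z) g \<in> H" "lincomb xq (snd z) d \<in> H"
      using lincomb_additive_code[OF H] hy_H xq nonneg[OF z] by blast+
    then show ?thesis unfolding L_def using additive_code_vadd[OF H] by blast
  qed
  have L_add: "L (vadd z z') = vadd (L z) (L z')" for z z'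
  proof -
    have "L (vadd z z') = vadd (vadd (lincomb hy (fst z) g) (lincomb hy (fst z') g))
        (vadd (lincomb xq (snd z) d) (lincomb xq (snd z') d))"
      unfolding L_def using lincomb_add_mod2[OF hy_ord2] lincomb_add_mod4 by (simp add: vadd_def)
    also have "\<dots> = vadd (L z) (L z')" unfolding L_def
      by (rule vec_eqI; simp add: mod_simps; simp add: algebra_simps)
    finally show ?thesis .
  qed
  have L_ker: "z = vzero" if "z \<in> V g d" "L z = vzero" for z
    using lincomb_basis_eq_vzero_imp[OF Q(1) _ Q(3) D(1) hy hx _ that[unfolded L_def]] Q(2) xq
      additive_code_subset[OF H] by blast
  have "card H = card (V g d)" using card(3) by (simp add: card_V)
  then show ?thesis
    using iso_Z2Z4_if_injective_hom[OF additive_code_subset[OF H] additive_code_finite[OF H]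
        L_mem L_add L_ker] by blast
qed

lemma vindep_empty: "vindep {}"
  by (simp add: vindep_def)

lemma iso_Z2Z4_if_card:
  assumes H: "additive_code a b H"
    and card_H: "card H = 2 ^ (g + 2 * d)" and card_ord2: "card (H \<inter> ord2 a b) = 2 ^ (g + d)"
  shows "iso_Z2Z4 H g d"
proof -
  define D2 where "D2 = (\<lambda>x. vadd x x) ` H"
  have D2: "additive_code a b D2" unfolding D2_def by (rule additive_code_doubles[OF H])
  have D2_sub: "D2 \<subseteq> H \<inter> ord2 a b"
    unfolding D2_def using additive_code_vadd[OF H] double_ord2 additive_code_subset[OF H] by blast
  have "card D2 \<noteq> 0" using additive_code_vzero[OF D2] additive_code_finite[OF D2] by auto
  moreover have "2 ^ (g + 2 * d) = 2 ^ (g + d) * card D2"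
    using card_eq_card_doubles[OF H] card_H card_ord2 by (simp add: D2_def)
  ultimately have card_D2: "card D2 = 2 ^ d" using two_power_factor(2) by fastforce
  obtain BD where BD: "BD \<subseteq> D2" "vindep BD" "vspan BD = D2"
    using basis_extension[OF D2 _ empty_subsetI vindep_empty] D2_sub by blast
  have fin_BD: "finite BD" using finite_subset[OF BD(1) additive_code_finite[OF D2]] .
  have card_BD: "card BD = d" using card_vspan[OF fin_BD BD(2)] BD(3) card_D2 by simp
  have HW: "additive_code a b (H \<inter> ord2 a b)" by (rule additive_code_Int[OF H additive_code_ord2])
  obtain BQ where BQ: "BD \<subseteq> BQ" "BQ \<subseteq> H \<inter> ord2 a b" "vindep BQ" "vspan BQ = H \<inter> ord2 a b"
    using basis_extension[OF HW _ _ BD(2)] BD(1) D2_sub by blast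
  have fin_BQ: "finite BQ" using finite_subset[OF BQ(2) additive_code_finite[OF HW]] .
  have "card BQ = g + d" using card_vspan[OF fin_BQ BQ(3)] BQ(4) card_ord2 by simp
  then have "card (BQ - BD) = g" using card_Diff_subset[OF fin_BD BQ(1)] card_BD by simp
  then show ?thesis
    using iso_Z2Z4_if_basis[OF H fin_BQ BQ(2,3) BQ(1)] BD(1) card_BD card_H by (simp add: D2_def)
qed

section \<open>The binary rank \<open>\<kappa>\<close>\<close>

lemma fst_vsum: "inj_on fst T \<Longrightarrow> fst (vsum T) = bsum (fst ` T)"
  by (simp add: vsum_def bsum_def sum.reindex fun_eq_iff)

lemma bsum_fst_basis:
  assumes E: "additive_code a b E" and inj_E: "inj_on fst E"
    and B': "B' \<subseteq> E" "vindep B'" "vspan B' = E"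
  shows "inj_on bsum (Pow (fst ` B'))" "bsum ` Pow (fst ` B') = fst ` E"
proof -
  have fin_B': "finite B'" using finite_subset[OF B'(1) additive_code_finite[OF E]] .
  have inj_B': "inj_on fst B'" using inj_on_subset[OF inj_E B'(1)] .
  have vsum_E: "vsum T \<in> E" and fst_vsum_T: "fst (vsum T) = bsum (fst ` T)" if "T \<subseteq> B'" for T
    using vsum_additive_code[OF E finite_subset[OF that fin_B']] that B'(1)
      fst_vsum[OF inj_on_subset[OF inj_B' that]] by auto
  show "inj_on bsum (Pow (fst ` B'))"
  proof (rule inj_onI)
    fix S S' assume "S \<in> Pow (fst ` B')" "S' \<in> Pow (fst ` B')" and eq: "bsum S = bsum S'"
    then obtain T T' where T: "T \<subseteq> B'" "S = fst ` T" and T': "T' \<subseteq> B'" "S' = fst ` T'"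
      by (auto simp: subset_image_iff)
    have "fst (vsum T) = fst (vsum T')" using eq T T' fst_vsum_T by simp
    then have "vsum T = vsum T'" using inj_onD[OF inj_E] vsum_E T(1) T'(1) by blast
    then have "T = T'" using inj_onD[OF B'(2)[unfolded vindep_def]] T(1) T'(1) by blast
    then show "S = S'" using T T' by simp
  qed
  show "bsum ` Pow (fst ` B') = fst ` E"
  proof
    show "bsum ` Pow (fst ` B') \<subseteq> fst ` E"
    proof
      fix u assume "u \<in> bsum ` Pow (fst ` B')"
      then obtain T where "T \<subseteq> B'" "u = bsum (fst ` T)" by (auto simp: subset_image_iff)
      then show "u \<in> fst ` E" using vsum_E fst_vsum_T by (metis image_eqI)
    qed
    show "fst ` E \<subseteq> bsum ` Pow (fst ` B')"
    proof
      fix u assume "u \<in> fst ` E"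
      then obtain x where "x \<in> E" "u = fst x" by blast
      then obtain T where "T \<subseteq> B'" "x = vsum T" using B'(3) by (auto simp: vspan_def)
      then show "u \<in> bsum ` Pow (fst ` B')" using fst_vsum_T \<open>u = fst x\<close> by auto
    qed
  qed
qed

lemma bin_dim_fst_image:
  assumes E: "additive_code a b E" and snd0: "\<forall>x\<in>E. snd x = (\<lambda>_. 0)" and card_E: "card E = 2 ^ k"
  shows "bin_dim (fst ` E) k"
proof -
  have EW: "E \<subseteq> ord2 a b"
  proof
    fix x assume "x \<in> E"
    then have "x \<in> V a b" "snd x = (\<lambda>_. 0)" using snd0 additive_code_subset[OF E] by auto
    then show "x \<in> ord2 a b" by (simp add: mem_ord2_iff)
  qed
  have inj_E: "inj_on fst E" using snd0 by (intro inj_onI) (simp add: prod_eq_iff)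
  obtain B' where B': "B' \<subseteq> E" "vindep B'" "vspan B' = E"
    using basis_extension[OF E EW empty_subsetI vindep_empty] by blast
  have fin_B': "finite B'" using finite_subset[OF B'(1) additive_code_finite[OF E]] .
  have "card (fst ` B') = k"
    using card_vspan[OF fin_B' B'(2)] B'(3) card_E card_image[OF inj_on_subset[OF inj_E B'(1)]] by simp
  then show ?thesis
    unfolding bin_dim_def using bsum_fst_basis[OF E inj_E B'] fin_B' B'(1) by blast
qed

lemma order2_part_eq: "additive_code a b H \<Longrightarrow> order2_part H = H \<inter> ord2 a b"
  using additive_code_subset by (auto simp: order2_part_def ord2_def)

lemma card_ord2_eq_card_fst:
  assumes H: "additive_code a b H"
  shows "card (H \<inter> ord2 a b) = card (fst ` (H \<inter> ord2 a b)) * card (H \<inter> twoV a b)"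
proof (rule card_by_kernel)
  have HW: "additive_code a b (H \<inter> ord2 a b)" by (rule additive_code_Int[OF H additive_code_ord2])
  show "H \<inter> ord2 a b \<subseteq> V a b" "H \<inter> twoV a b \<subseteq> V a b" "finite (H \<inter> ord2 a b)"
    using additive_code_subset[OF HW] additive_code_subset[OF H] additive_code_finite[OF HW] by auto
  show "vadd k x \<in> H \<inter> ord2 a b" if "x \<in> H \<inter> ord2 a b" "k \<in> H \<inter> twoV a b" for x k
  proof -
    have "k \<in> H \<inter> ord2 a b" using that(2) twoV_subset_ord2 by blast
    then show ?thesis using additive_code_vadd[OF HW _ that(1)] by blast
  qed
  show "fst x = fst y \<longleftrightarrow> vsub x y \<in> H \<inter> twoV a b" if "x \<in> H \<inter> ord2 a b" "y \<in> H \<inter> ord2 a b" for x y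
  proof -
    have xV: "x \<in> V a b" and yV: "y \<in> V a b" using that additive_code_subset[OF HW] by auto
    have "(fst x i - fst y i) mod 2 = 0 \<longleftrightarrow> fst x i = fst y i" for i
      using V_fst_cases[OF xV, of i] V_fst_cases[OF yV, of i] by auto
    then have "fst (vsub x y) = (\<lambda>_. 0) \<longleftrightarrow> fst x = fst y" by (auto simp: fun_eq_iff)
    moreover have "vsub x y \<in> H \<inter> ord2 a b" using additive_code_vsub[OF HW that] .
    ultimately show ?thesis by (auto simp: mem_twoV_iff)
  qed
qed

definition bin_part :: "z2z4vec \<Rightarrow> z2z4vec" where
  "bin_part x = (fst x, \<lambda>_. 0)"

lemma fst_bin_part [simp]: "fst (bin_part x) = fst x"
  and snd_bin_part [simp]: "snd (bin_part x) = (\<lambda>_. 0)"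
  by (simp_all add: bin_part_def)

lemma additive_code_bin_part:
  assumes H: "additive_code a b H"
  shows "additive_code a b (bin_part ` H)"
  unfolding additive_code_def
proof (intro conjI ballI)
  show "bin_part ` H \<subseteq> V a b"
  proof
    fix x assume "x \<in> bin_part ` H"
    then obtain u where u: "u \<in> H" "x = bin_part u" by blast
    then have uV: "u \<in> V a b" using additive_code_subset[OF H] by blast
    show "x \<in> V a b"
      unfolding mem_V_iff u(2) using V_fst_cases[OF uV] V_fst_outside[OF uV] by auto
  qed
  show "vzero \<in> bin_part ` H"
    by (rule rev_image_eqI[OF additive_code_vzero[OF H]]) (simp add: vzero_def bin_part_def)
  fix x y assume "x \<in> bin_part ` H" "y \<in> bin_part ` H"
  then obtain u v where uv: "u \<in> H" "v \<in> H" "x = bin_part u" "y = bin_part v" by blast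
  have "vadd x y = bin_part (vadd u v)" unfolding uv(3,4) by (rule vec_eqI) simp_all
  then show "vadd x y \<in> bin_part ` H" using additive_code_vadd[OF H uv(1,2)] by blast
qed

lemma bin_dim_order2_part:
  assumes H: "additive_code a b H"
    and card_ord2: "card (H \<inter> ord2 a b) = 2 ^ (k + q)" and card_twoV: "card (H \<inter> twoV a b) = 2 ^ q"
  shows "bin_dim (fst ` order2_part H) k"
proof -
  define HW where "HW = H \<inter> ord2 a b"
  define E where "E = bin_part ` HW"
  have HW: "additive_code a b HW" unfolding HW_def by (rule additive_code_Int[OF H additive_code_ord2])
  have "card (fst ` HW) \<noteq> 0"
    using additive_code_vzero[OF HW] additive_code_finite[OF HW] by auto
  then have "card (fst ` HW) = 2 ^ k"
    using card_ord2_eq_card_fst[OF H] card_ord2 card_twoV two_power_factor(2)[of "k + q" q]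
    by (simp add: HW_def mult.commute)
  moreover have "card E = card (fst ` HW)"
  proof -
    have "inj_on fst E" by (rule inj_onI) (auto simp: E_def prod_eq_iff)
    then show ?thesis using card_image[of fst E] by (simp add: E_def image_image)
  qed
  ultimately have "bin_dim (fst ` E) k"
    using bin_dim_fst_image[OF additive_code_bin_part[OF HW]] by (simp add: E_def)
  moreover have "fst ` E = fst ` order2_part H"
    by (force simp: E_def HW_def order2_part_eq[OF H])
  ultimately show ?thesis by simp
qed

section \<open>Perfect codes\<close>

locale perfect_code =
  fixes a b :: nat and C :: "z2z4vec set"
  assumes additive: "additive_code a b C"
    and perfect: "perfect1 (a + 2 * b) (Phi a ` C)"
begin

lemma C_subset_V: "C \<subseteq> V a b"
  and vzero_C: "vzero \<in> C"
  and vadd_C: "x \<in> C \<Longrightarrow> y \<in> C \<Longrightarrow> vadd x y \<in> C"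
  and vsub_C: "x \<in> C \<Longrightarrow> y \<in> C \<Longrightarrow> vsub x y \<in> C"
  using additive_code_subset[OF additive] additive_code_vzero[OF additive]
    additive_code_vadd[OF additive] additive_code_vsub[OF additive] by auto

lemma unique_decomposition:
  assumes v: "v \<in> V a b" shows "\<exists>!c. c \<in> C \<and> vsub v c \<in> gray_ball a b"
proof -
  obtain c' where c': "c' \<in> Phi a ` C" "hdist (a + 2 * b) (Phi a v) c' \<le> 1"
    and unique: "\<And>c''. c'' \<in> Phi a ` C \<Longrightarrow> hdist (a + 2 * b) (Phi a v) c'' \<le> 1 \<Longrightarrow> c'' = c'"
    using perfect Phi_BV[OF v] unfolding perfect1_def by metis
  obtain c where c: "c \<in> C" "c' = Phi a c" using c'(1) by blast
  show ?thesis
  proof (rule ex1I[of _ c])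
    show "c \<in> C \<and> vsub v c \<in> gray_ball a b"
      using c c'(2) hdist_Phi_le1_iff[OF v] C_subset_V by blast
  next
    fix d assume d: "d \<in> C \<and> vsub v d \<in> gray_ball a b"
    then have "Phi a d = Phi a c"
      using unique c hdist_Phi_le1_iff[OF v] C_subset_V by blast
    then show "d = c" using inj_on_Phi[of a b] d c C_subset_V by (auto dest: inj_onD)
  qed
qed

definition decode :: "z2z4vec \<Rightarrow> z2z4vec" where
  "decode v = (THE c. c \<in> C \<and> vsub v c \<in> gray_ball a b)"

definition coset_leader :: "z2z4vec \<Rightarrow> z2z4vec" where
  "coset_leader v = vsub v (decode v)"

lemma decode_C: "v \<in> V a b \<Longrightarrow> decode v \<in> C"
  and coset_leader_gray_ball: "v \<in> V a b \<Longrightarrow> coset_leader v \<in> gray_ball a b"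
  using theI'[OF unique_decomposition] unfolding decode_def coset_leader_def by auto

lemma decode_eqI: "v \<in> V a b \<Longrightarrow> c \<in> C \<Longrightarrow> vsub v c \<in> gray_ball a b \<Longrightarrow> decode v = c"
  unfolding decode_def using unique_decomposition by (simp add: the1_equality)

lemma coset_leader_id:
  assumes e: "e \<in> gray_ball a b" shows "coset_leader e = e"
proof -
  have eV: "e \<in> V a b" using e gray_ball_subset_V by blast
  then have "decode e = vzero" using decode_eqI[OF eV vzero_C] e by simp
  then show ?thesis using eV by (simp add: coset_leader_def)
qed

lemma coset_leader_eq_iff:
  assumes v: "v \<in> V a b" and w: "w \<in> V a b"
  shows "coset_leader v = coset_leader w \<longleftrightarrow> vsub v w \<in> C"
proof
  assume eq: "coset_leader v = coset_leader w"
  have decode_eq: "decode u = vsub u (coset_leader u)" if "u \<in> V a b" for u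
    using vsub_vsub_self[of "decode u" a b u] decode_C[OF that] C_subset_V
    unfolding coset_leader_def by auto
  have "vsub v w = vsub (decode v) (decode w)"
    unfolding decode_eq[OF v] decode_eq[OF w] eq by (rule vsub_vsub_cancel[symmetric])
  then show "vsub v w \<in> C" using decode_C[OF v] decode_C[OF w] vsub_C by simp
next
  assume d: "vsub v w \<in> C"
  define c where "c = vsub (decode v) (vsub v w)"
  have "c \<in> C" unfolding c_def using decode_C[OF v] d vsub_C by blast
  moreover have "vsub w c = coset_leader v"
    unfolding c_def coset_leader_def by (rule vsub_vsub_vsub)
  ultimately have "decode w = c"
    using coset_leader_gray_ball[OF v] by (intro decode_eqI[OF w]) simp_all
  then show "coset_leader v = coset_leader w"
    using \<open>vsub w c = coset_leader v\<close> unfolding coset_leader_def[of w] by simp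
qed

text \<open>A code word \<open>2 unit4 j 1\<close> would leave \<open>unit4 j 1\<close> at Gray distance 1 from two code words.\<close>

lemma bin_ball_if_double_C:
  assumes e: "e \<in> gray_ball a b" and double: "vadd e e \<in> C"
  shows "e \<in> bin_ball a"
proof (rule ccontr)
  assume "e \<notin> bin_ball a"
  then obtain j k where jk: "j < b" "k = 1 \<or> k = 3" "e = unit4 j k"
    using e unfolding gray_ball_def bin_ball_def by auto
  have "vadd e e = unit4 j 2" using jk by (intro vec_eqI) auto
  then have "unit4 j 2 \<in> C" using double by simp
  moreover have "vsub (unit4 j 1) vzero \<in> gray_ball a b" "vsub (unit4 j 1) (unit4 j 2) \<in> gray_ball a b"
  proof -
    have "vsub (unit4 j 1) vzero = unit4 j 1" "vsub (unit4 j 1) (unit4 j 2) = unit4 j 3"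
      by (intro vec_eqI; simp)+
    then show "vsub (unit4 j 1) vzero \<in> gray_ball a b" "vsub (unit4 j 1) (unit4 j 2) \<in> gray_ball a b"
      using unit4_gray_ball jk(1) by simp_all
  qed
  moreover have "unit4 j 1 \<in> V a b" using jk(1) by (auto simp: mem_V_iff)
  ultimately have "unit4 j 2 = vzero" using unique_decomposition vzero_C by blast
  then show False using unit4_neq_vzero[of 2 j] by simp
qed

lemma subset_coset_leader_image:
  assumes "E \<subseteq> gray_ball a b" "E \<subseteq> U" shows "E \<subseteq> coset_leader ` U"
proof
  fix e assume "e \<in> E"
  then have "e = coset_leader e" "e \<in> U" using assms coset_leader_id[of e] by auto
  then show "e \<in> coset_leader ` U" by (rule image_eqI)
qed

lemma coset_leader_image_V: "coset_leader ` V a b = gray_ball a b"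
proof
  show "coset_leader ` V a b \<subseteq> gray_ball a b" using coset_leader_gray_ball by auto
  show "gray_ball a b \<subseteq> coset_leader ` V a b"
    by (rule subset_coset_leader_image[OF order.refl gray_ball_subset_V])
qed

lemma card_V_eq: "card (V a b) = card (gray_ball a b) * card C"
proof -
  have "card (V a b) = card (coset_leader ` V a b) * card C"
  proof (rule card_by_kernel[OF order.refl C_subset_V finite_V])
    show "vadd k x \<in> V a b" if "x \<in> V a b" "k \<in> C" for x k
      using vadd_V that C_subset_V by blast
    show "coset_leader x = coset_leader y \<longleftrightarrow> vsub x y \<in> C" if "x \<in> V a b" "y \<in> V a b" for x y
      by (rule coset_leader_eq_iff[OF that])
  qed
  then show ?thesis by (simp add: coset_leader_image_V)
qed


text \<open>Their duals are \<open>dual C \<inter> 2V\<close> and \<open>dual C \<inter> ord2\<close>, which turns the counts for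
  these codes into counts for the dual code.\<close>

definition halfC :: "z2z4vec set" where
  "halfC = {v \<in> V a b. vadd v v \<in> C}"

definition C_plus_twoV :: "z2z4vec set" where
  "C_plus_twoV = {v \<in> V a b. \<exists>w\<in>twoV a b. vsub v w \<in> C}"

lemma halfC_subset_V: "halfC \<subseteq> V a b"
  and C_plus_twoV_subset_V: "C_plus_twoV \<subseteq> V a b"
  by (auto simp: halfC_def C_plus_twoV_def)

lemma C_subset_halfC: "C \<subseteq> halfC"
  using C_subset_V vadd_C by (auto simp: halfC_def)

lemma twoV_subset_C_plus_twoV: "twoV a b \<subseteq> C_plus_twoV"
proof
  fix w assume "w \<in> twoV a b"
  moreover have "w \<in> V a b" using \<open>w \<in> twoV a b\<close> twoV_subset_ord2 ord2_subset_V by blast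
  ultimately show "w \<in> C_plus_twoV" using vzero_C by (auto simp: C_plus_twoV_def intro!: bexI[of _ w])
qed

lemma C_subset_C_plus_twoV: "C \<subseteq> C_plus_twoV"
proof
  fix c assume "c \<in> C"
  then have "c \<in> V a b" "vsub c vzero = c" using C_subset_V by auto
  then show "c \<in> C_plus_twoV" using \<open>c \<in> C\<close> by (auto simp: C_plus_twoV_def intro!: bexI[of _ vzero])
qed

lemma additive_code_halfC: "additive_code a b halfC"
  unfolding additive_code_def
proof (intro conjI ballI)
  show "halfC \<subseteq> V a b" by (rule halfC_subset_V)
  show "vzero \<in> halfC" using vzero_C by (simp add: halfC_def)
  fix x y assume "x \<in> halfC" "y \<in> halfC"
  then show "vadd x y \<in> halfC"
    using vadd_C vadd_V by (auto simp: halfC_def double_vadd)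
qed

lemma additive_code_C_plus_twoV: "additive_code a b C_plus_twoV"
  unfolding additive_code_def
proof (intro conjI ballI)
  show "C_plus_twoV \<subseteq> V a b" by (rule C_plus_twoV_subset_V)
  show "vzero \<in> C_plus_twoV" using vzero_C C_subset_C_plus_twoV by blast
  fix x y assume x: "x \<in> C_plus_twoV" and y: "y \<in> C_plus_twoV"
  obtain w where w: "w \<in> twoV a b" "vsub x w \<in> C" using x by (auto simp: C_plus_twoV_def)
  obtain w' where w': "w' \<in> twoV a b" "vsub y w' \<in> C" using y by (auto simp: C_plus_twoV_def)
  have "vsub (vadd x y) (vadd w w') \<in> C"
    unfolding vsub_vadd_vadd by (rule vadd_C[OF w(2) w'(2)])
  moreover have "vadd x y \<in> V a b" using x y C_plus_twoV_subset_V vadd_V by blast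
  ultimately show "vadd x y \<in> C_plus_twoV"
    using vadd_twoV[OF w(1) w'(1)] unfolding C_plus_twoV_def by blast
qed

lemma coset_leader_image_halfC: "coset_leader ` halfC = bin_ball a"
proof
  show "coset_leader ` halfC \<subseteq> bin_ball a"
  proof
    fix e assume "e \<in> coset_leader ` halfC"
    then obtain v where v: "v \<in> V a b" "vadd v v \<in> C" "e = coset_leader v" by (auto simp: halfC_def)
    have "vadd e e = vsub (vadd v v) (vadd (decode v) (decode v))"
      unfolding v(3) coset_leader_def by (rule double_vsub)
    moreover have "vsub (vadd v v) (vadd (decode v) (decode v)) \<in> C"
      by (intro vsub_C vadd_C decode_C v(1,2))
    ultimately have "vadd e e \<in> C" by simp
    moreover have "e \<in> gray_ball a b" using coset_leader_gray_ball[OF v(1)] v(3) by simp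
    ultimately show "e \<in> bin_ball a" by (rule bin_ball_if_double_C[rotated])
  qed
  have "bin_ball a \<subseteq> halfC"
  proof
    fix e assume "e \<in> bin_ball a"
    then have "e \<in> ord2 a b" using bin_ball_subset_ord2 by blast
    then show "e \<in> halfC" using vzero_C by (simp add: ord2_def halfC_def)
  qed
  then show "bin_ball a \<subseteq> coset_leader ` halfC"
    by (rule subset_coset_leader_image[OF bin_ball_subset_gray_ball])
qed

lemma card_halfC: "card halfC = (1 + a) * card C"
proof -
  have "card halfC = card (coset_leader ` halfC) * card C"
  proof (rule card_by_kernel[OF halfC_subset_V C_subset_V])
    show "finite halfC" using finite_subset[OF halfC_subset_V finite_V] .
    show "vadd k x \<in> halfC" if "x \<in> halfC" "k \<in> C" for x k
      using that C_subset_halfC additive_code_vadd[OF additive_code_halfC] by blast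
    show "coset_leader x = coset_leader y \<longleftrightarrow> vsub x y \<in> C" if "x \<in> halfC" "y \<in> halfC" for x y
      using that halfC_subset_V coset_leader_eq_iff by blast
  qed
  then show ?thesis by (simp add: coset_leader_image_halfC card_bin_ball)
qed

lemma coset_leader_image_ord2: "coset_leader ` ord2 a b = bin_ball a"
proof
  have "ord2 a b \<subseteq> halfC" using vzero_C by (auto simp: ord2_def halfC_def)
  then show "coset_leader ` ord2 a b \<subseteq> bin_ball a" using coset_leader_image_halfC by blast
  show "bin_ball a \<subseteq> coset_leader ` ord2 a b"
    by (rule subset_coset_leader_image[OF bin_ball_subset_gray_ball bin_ball_subset_ord2])
qed

lemma card_ord2_eq: "card (ord2 a b) = (1 + a) * card (C \<inter> ord2 a b)"
proof -
  have "card (ord2 a b) = card (coset_leader ` ord2 a b) * card (C \<inter> ord2 a b)"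
  proof (rule card_by_kernel[OF ord2_subset_V])
    show "C \<inter> ord2 a b \<subseteq> V a b" using ord2_subset_V by blast
    show "finite (ord2 a b)" using finite_subset[OF ord2_subset_V finite_V] .
    show "vadd k x \<in> ord2 a b" if "x \<in> ord2 a b" "k \<in> C \<inter> ord2 a b" for x k
      using vadd_ord2[of k a b x] that by blast
    show "coset_leader x = coset_leader y \<longleftrightarrow> vsub x y \<in> C \<inter> ord2 a b"
      if "x \<in> ord2 a b" "y \<in> ord2 a b" for x y
    proof -
      have "x \<in> V a b" "y \<in> V a b" using that ord2_subset_V by blast+
      then show ?thesis using coset_leader_eq_iff vsub_ord2[OF that] by simp
    qed
  qed
  then show ?thesis by (simp add: coset_leader_image_ord2 card_bin_ball)
qed

lemma card_V_eq_halfC: "card (V a b) = card (coset_leader ` twoV a b) * card halfC"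
proof -
  have "card (V a b) = card ((\<lambda>v. coset_leader (vadd v v)) ` V a b) * card halfC"
  proof (rule card_by_kernel[OF order.refl halfC_subset_V finite_V])
    show "vadd k x \<in> V a b" if "x \<in> V a b" "k \<in> halfC" for x k
      using vadd_V that halfC_subset_V by blast
    show "coset_leader (vadd x x) = coset_leader (vadd y y) \<longleftrightarrow> vsub x y \<in> halfC"
      if x: "x \<in> V a b" and y: "y \<in> V a b" for x y
      using coset_leader_eq_iff[OF vadd_V[OF x x] vadd_V[OF y y]] vsub_V[OF x y]
      by (simp add: halfC_def double_vsub)
  qed
  then show ?thesis by (simp add: twoV_def image_image)
qed

lemma card_twoV_eq: "card (twoV a b) = card (coset_leader ` twoV a b) * card (C \<inter> twoV a b)"
proof (rule card_by_kernel)
  show "twoV a b \<subseteq> V a b" "C \<inter> twoV a b \<subseteq> V a b"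
    using twoV_subset_ord2 ord2_subset_V by blast+
  show "finite (twoV a b)" by (simp add: twoV_def)
  show "vadd k x \<in> twoV a b" if "x \<in> twoV a b" "k \<in> C \<inter> twoV a b" for x k
    using vadd_twoV[of k a b x] that by blast
  show "coset_leader x = coset_leader y \<longleftrightarrow> vsub x y \<in> C \<inter> twoV a b"
    if "x \<in> twoV a b" "y \<in> twoV a b" for x y
  proof -
    have "x \<in> V a b" "y \<in> V a b" using that twoV_subset_ord2 ord2_subset_V by blast+
    then show ?thesis using coset_leader_eq_iff vsub_twoV[OF that] by simp
  qed
qed

lemma card_C_plus_twoV: "card C_plus_twoV = card (coset_leader ` twoV a b) * card C"
proof -
  have "card C_plus_twoV = card (coset_leader ` C_plus_twoV) * card C"
  proof (rule card_by_kernel[OF C_plus_twoV_subset_V C_subset_V])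
    show "finite C_plus_twoV" using finite_subset[OF C_plus_twoV_subset_V finite_V] .
    show "vadd k x \<in> C_plus_twoV" if "x \<in> C_plus_twoV" "k \<in> C" for x k
      using that C_subset_C_plus_twoV additive_code_vadd[OF additive_code_C_plus_twoV] by blast
    show "coset_leader x = coset_leader y \<longleftrightarrow> vsub x y \<in> C"
      if "x \<in> C_plus_twoV" "y \<in> C_plus_twoV" for x y
      using that C_plus_twoV_subset_V coset_leader_eq_iff by blast
  qed
  moreover have "coset_leader ` C_plus_twoV = coset_leader ` twoV a b"
  proof
    show "coset_leader ` C_plus_twoV \<subseteq> coset_leader ` twoV a b"
    proof
      fix e assume "e \<in> coset_leader ` C_plus_twoV"
      then obtain v w where v: "v \<in> V a b" "w \<in> twoV a b" "vsub v w \<in> C" "e = coset_leader v"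
        by (auto simp: C_plus_twoV_def)
      have "w \<in> V a b" using v(2) twoV_subset_ord2 ord2_subset_V by blast
      then have "coset_leader v = coset_leader w" using coset_leader_eq_iff v(1,3) by blast
      then show "e \<in> coset_leader ` twoV a b" using v(2,4) by blast
    qed
    show "coset_leader ` twoV a b \<subseteq> coset_leader ` C_plus_twoV"
      using twoV_subset_C_plus_twoV by (rule image_mono)
  qed
  ultimately show ?thesis by simp
qed

lemma vadd_decode_coset_leader: "v \<in> V a b \<Longrightarrow> vadd (decode v) (coset_leader v) = v"
  unfolding coset_leader_def by (metis vadd_vsub_cancel vadd_commute)

lemma dual_halfC: "dual a b halfC = dual a b C \<inter> twoV a b"
proof
  show "dual a b halfC \<subseteq> dual a b C \<inter> twoV a b"
  proof
    fix y assume y: "y \<in> dual a b halfC"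
    then have yV: "y \<in> V a b" and orth: "\<And>x. x \<in> halfC \<Longrightarrow> inner24 a b x y = 0"
      by (auto simp: dual_def)
    have "fst y i = 0" for i
    proof (cases "i < a")
      case True
      have "unit2 i \<in> halfC" using True vzero_C by (auto simp: halfC_def double_unit2 mem_V_iff)
      then show ?thesis using orth inner24_unit2_eq_0_iff[OF yV True] by blast
    qed (use V_fst_outside[OF yV] in simp)
    moreover have "even (snd y j)" for j
    proof (cases "j < b")
      case True
      have "unit4 j 2 \<in> halfC" using True vzero_C by (auto simp: halfC_def double_unit4 mem_V_iff)
      then show ?thesis using orth inner24_unit4_eq_0_iff[OF yV True] by blast
    qed (use V_snd_outside[OF yV] in simp)
    moreover have "y \<in> dual a b C" using y dual_antimono[OF C_subset_halfC] by blast
    ultimately show "y \<in> dual a b C \<inter> twoV a b"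
      using yV by (auto simp: mem_twoV_iff mem_ord2_iff)
  qed
  show "dual a b C \<inter> twoV a b \<subseteq> dual a b halfC"
  proof
    fix y assume y: "y \<in> dual a b C \<inter> twoV a b"
    have "inner24 a b v y = 0" if v: "v \<in> halfC" for v
    proof -
      have vV: "v \<in> V a b" using v halfC_subset_V by blast
      have "inner24 a b (decode v) y = 0" using y decode_C[OF vV] by (auto simp: dual_def)
      moreover have "coset_leader v \<in> ord2 a b"
        using v coset_leader_image_halfC bin_ball_subset_ord2 by blast
      then have "inner24 a b (coset_leader v) y = 0" using inner24_ord2_twoV y by blast
      ultimately show ?thesis
        using inner24_vadd_left[of a b "decode v" "coset_leader v" y] vadd_decode_coset_leader[OF vV]
        by simp
    qed
    then show "y \<in> dual a b halfC" using y by (auto simp: dual_def)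
  qed
qed

lemma dual_C_plus_twoV: "dual a b C_plus_twoV = dual a b C \<inter> ord2 a b"
proof
  show "dual a b C_plus_twoV \<subseteq> dual a b C \<inter> ord2 a b"
  proof
    fix y assume y: "y \<in> dual a b C_plus_twoV"
    then have yV: "y \<in> V a b" and orth: "\<And>x. x \<in> C_plus_twoV \<Longrightarrow> inner24 a b x y = 0"
      by (auto simp: dual_def)
    have "even (snd y j)" for j
    proof (cases "j < b")
      case True
      have "unit4 j 2 \<in> twoV a b" using True by (auto simp: mem_twoV_iff mem_ord2_iff mem_V_iff)
      then have "unit4 j 2 \<in> C_plus_twoV" using twoV_subset_C_plus_twoV by blast
      then show ?thesis using orth inner24_unit4_eq_0_iff[OF yV True] by blast
    qed (use V_snd_outside[OF yV] in simp)
    moreover have "y \<in> dual a b C" using y dual_antimono[OF C_subset_C_plus_twoV] by blast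
    ultimately show "y \<in> dual a b C \<inter> ord2 a b" using yV by (auto simp: mem_ord2_iff)
  qed
  show "dual a b C \<inter> ord2 a b \<subseteq> dual a b C_plus_twoV"
  proof
    fix y assume y: "y \<in> dual a b C \<inter> ord2 a b"
    have "inner24 a b v y = 0" if v: "v \<in> C_plus_twoV" for v
    proof -
      obtain w where w: "w \<in> twoV a b" "vsub v w \<in> C" using v by (auto simp: C_plus_twoV_def)
      have vV: "v \<in> V a b" using v C_plus_twoV_subset_V by blast
      have "inner24 a b (vsub v w) y = 0" using y w by (auto simp: dual_def)
      moreover have "inner24 a b w y = 0"
        using inner24_ord2_twoV[of y a b w] y w(1) by (simp add: inner24_commute)
      ultimately show ?thesis
        using inner24_vadd_left[of a b "vsub v w" w y] vadd_vsub_cancel[OF vV] by simp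
    qed
    then show "y \<in> dual a b C_plus_twoV" using y by (auto simp: dual_def)
  qed
qed

lemma coset_leader_image_twoV: "vzero \<in> coset_leader ` twoV a b" "coset_leader ` twoV a b \<subseteq> V a b"
proof -
  show "vzero \<in> coset_leader ` twoV a b"
    by (rule rev_image_eqI[OF vzero_twoV]) (simp add: coset_leader_id gray_ball_def)
  have "coset_leader ` twoV a b \<subseteq> gray_ball a b"
  proof (rule image_subsetI)
    fix x assume "x \<in> twoV a b"
    then have "x \<in> V a b" using twoV_subset_ord2[of a b] ord2_subset_V[of a b] by blast
    then show "coset_leader x \<in> gray_ball a b" by (rule coset_leader_gray_ball)
  qed
  then show "coset_leader ` twoV a b \<subseteq> V a b" using gray_ball_subset_V[of a b] by (rule order.trans)
qed

lemma card_C_parts: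
  assumes R: "1 + a = 2 ^ R" and T: "1 + a + 2 * b = 2 ^ T"
  shows "T \<le> a + 2 * b" "R \<le> T" "T - R \<le> b"
    and "card C = 2 ^ (a + 2 * b - T)" "card (C \<inter> ord2 a b) = 2 ^ (a + b - R)"
    and "card (C \<inter> twoV a b) = 2 ^ (b - (T - R))"
    and "card halfC = 2 ^ (R + (a + 2 * b - T))" "card (coset_leader ` twoV a b) = 2 ^ (T - R)"
proof -
  have "2 ^ (a + 2 * b) = 2 ^ T * card C"
    using card_V_eq unfolding card_V card_gray_ball T .
  from two_power_factor_card[OF this vzero_C C_subset_V]
  show T_le: "T \<le> a + 2 * b" and card_C: "card C = 2 ^ (a + 2 * b - T)" .
  have "2 ^ (a + b) = 2 ^ R * card (C \<inter> ord2 a b)"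
    using card_ord2_eq unfolding card_ord2 R .
  from two_power_factor_card(2)[OF this] vzero_C vzero_ord2 C_subset_V
  show "card (C \<inter> ord2 a b) = 2 ^ (a + b - R)" by blast
  show card_halfC': "card halfC = 2 ^ (R + (a + 2 * b - T))"
    using card_halfC unfolding R card_C by (simp add: power_add)
  have "2 ^ (a + 2 * b) = 2 ^ (R + (a + 2 * b - T)) * card (coset_leader ` twoV a b)"
    using card_V_eq_halfC unfolding card_halfC' card_V by (simp add: mult.commute)
  from two_power_factor_card[OF this coset_leader_image_twoV]
  have le: "R + (a + 2 * b - T) \<le> a + 2 * b"
    and card_leaders: "card (coset_leader ` twoV a b) = 2 ^ (a + 2 * b - (R + (a + 2 * b - T)))" .
  show RT: "R \<le> T" using le T_le by arith
  have "a + 2 * b - (R + (a + 2 * b - T)) = T - R" using T_le RT by arith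
  then show card_leaders': "card (coset_leader ` twoV a b) = 2 ^ (T - R)"
    using card_leaders by simp
  have "2 ^ b = 2 ^ (T - R) * card (C \<inter> twoV a b)"
    using card_twoV_eq unfolding card_leaders' card_twoV .
  from two_power_factor_card[OF this] vzero_C vzero_twoV C_subset_V
  show "T - R \<le> b" "card (C \<inter> twoV a b) = 2 ^ (b - (T - R))" by blast+
qed

lemma card_dual_parts:
  assumes R: "1 + a = 2 ^ R" and T: "1 + a + 2 * b = 2 ^ T"
  shows "card (dual a b C) = 2 ^ T" "card (dual a b C \<inter> ord2 a b) = 2 ^ R"
    and "card (dual a b C \<inter> twoV a b) = 2 ^ (T - R)"
proof -
  note counts = card_C_parts[OF R T]
  show "card (dual a b C) = 2 ^ T"
    using card_dual_eq[OF additive counts(4)] counts(1) by simp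
  show "card (dual a b C \<inter> twoV a b) = 2 ^ (T - R)"
    using card_dual_eq[OF additive_code_halfC counts(7)] counts(1,2) by (simp add: dual_halfC)
  have "card C_plus_twoV = 2 ^ ((T - R) + (a + 2 * b - T))"
    using card_C_plus_twoV unfolding counts(8) counts(4) by (simp add: power_add)
  then show "card (dual a b C \<inter> ord2 a b) = 2 ^ R"
    using card_dual_eq[OF additive_code_C_plus_twoV] counts(1,2) by (simp add: dual_C_plus_twoV)
qed


lemma perfect_code_types:
  assumes R: "1 + a = 2 ^ R" and T: "1 + a + 2 * b = 2 ^ T"
  shows "has_type a b C (a + T - 2 * R) (b + R - T) (a + T - 2 * R)"
    and "has_type a b (dual a b C) (2 * R - T) (T - R) (2 * R - T)"
proof -
  note C_counts = card_C_parts[OF R T] and dual_counts = card_dual_parts[OF R T]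
  have "R \<le> a" using less_exp[of R] R by linarith
  have "card (dual a b C \<inter> twoV a b) \<le> card (dual a b C \<inter> ord2 a b)"
    using twoV_subset_ord2 additive_code_finite[OF additive_code_dual] by (intro card_mono) auto
  then have "T - R \<le> R" using dual_counts(2,3) by simp
  have "a + 2 * b - T = (a + T - 2 * R) + 2 * (b + R - T)"
    "a + b - R = (a + T - 2 * R) + (b + R - T)" "b - (T - R) = b + R - T"
    using C_counts(2,3) \<open>R \<le> a\<close> by arith+
  then have "card C = 2 ^ ((a + T - 2 * R) + 2 * (b + R - T))"
    "card (C \<inter> ord2 a b) = 2 ^ ((a + T - 2 * R) + (b + R - T))" "card (C \<inter> twoV a b) = 2 ^ (b + R - T)"
    using C_counts(4-6) by simp_all
  then show "has_type a b C (a + T - 2 * R) (b + R - T) (a + T - 2 * R)"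
    unfolding has_type_def using additive iso_Z2Z4_if_card bin_dim_order2_part by blast
  have "T = (2 * R - T) + 2 * (T - R)" "R = (2 * R - T) + (T - R)"
    using C_counts(2) \<open>T - R \<le> R\<close> by arith+
  then have "card (dual a b C) = 2 ^ ((2 * R - T) + 2 * (T - R))"
    "card (dual a b C \<inter> ord2 a b) = 2 ^ ((2 * R - T) + (T - R))"
    "card (dual a b C \<inter> twoV a b) = 2 ^ (T - R)"
    using dual_counts by (simp_all only:)
  then show "has_type a b (dual a b C) (2 * R - T) (T - R) (2 * R - T)"
    unfolding has_type_def using additive_code_dual iso_Z2Z4_if_card bin_dim_order2_part by blast
qed

end

theorem proposition2p3:
  fixes r t :: nat and C :: "z2z4vec set"
  assumes "2 \<le> r" and "r \<le> t" and "t \<le> 2 * r"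
    and "additive_code (2^r - 1) (2^(t-1) - 2^(r-1)) C"
    and "perfect1 ((2^r - 1) + 2 * (2^(t-1) - 2^(r-1))) (Phi (2^r - 1) ` C)"
  shows "has_type (2^r - 1) (2^(t-1) - 2^(r-1)) C
           ((2^r + t) - (2*r + 1)) ((2^(t-1) + r) - (2^(r-1) + t)) ((2^r + t) - (2*r + 1))
       \<and> has_type (2^r - 1) (2^(t-1) - 2^(r-1)) (dual (2^r - 1) (2^(t-1) - 2^(r-1)) C)
           (2*r - t) (t - r) (2*r - t)"
proof -
  interpret perfect_code "2^r - 1" "2^(t-1) - 2^(r-1)" C
    using assms(4,5) by unfold_locales
  have r: "(2::nat) ^ r = 2 * 2 ^ (r - 1)" using assms(1) by (cases r) simp_all
  have t: "(2::nat) ^ t = 2 * 2 ^ (t - 1)" using assms(1,2) by (cases t) simp_all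
  have rt: "(2::nat) ^ (r - 1) \<le> 2 ^ (t - 1)" and "1 \<le> (2::nat) ^ (r - 1)"
    using assms(2) by simp_all
  have "1 + (2 ^ r - 1) + 2 * (2 ^ (t - 1) - 2 ^ (r - 1)) = (2::nat) ^ t"
    unfolding r t using rt \<open>1 \<le> 2 ^ (r - 1)\<close> by arith
  note types = perfect_code_types[of r t, OF _ this]
  have "(2 ^ r - 1) + t - 2 * r = (2 ^ r + t) - (2 * r + 1)"
    and "(2 ^ (t - 1) - 2 ^ (r - 1)) + r - t = (2 ^ (t - 1) + r) - (2 ^ (r - 1) + t)"
    using r rt \<open>1 \<le> 2 ^ (r - 1)\<close> by simp_all
  then show ?thesis using types by simp
qed

end
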